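(* Under the standing assumptions the following identities hold: \begin{align*} Q_{2,j}(a)&=(-1)^j\,\mathbf m_0^{-1}\mathbf l_0^{-1}\mathbf m_1^{-1}\mathbf l_1^{-1}\cdots\mathbf l_{j-1}^{-1}\mathbf m_j^{-1}, && 0\le j\le n-1,\\ \Gamma_{1,j}(a)&=(-1)^j\,\mathbf m_0^{-1}\mathbf l_0^{-1}\mathbf m_1^{-1}\mathbf l_1^{-1}\cdots\mathbf m_{j-1}^{-1}\mathbf l_{j-1}^{-1}, && 1\le j\le n,\\ P_{2,j}(a)&=(-1)^j\,\mathbf m_0^{-1}\mathbf l_0^{-1}\cdots\mathbf l_{j-1}^{-1}\mathbf m_j^{-1}\,(\mathbf m_0+\mathbf m_1+\cdots+\mathbf m_j), && 1\le j\le n-1,\\ \Theta_{1,j}(a)&=(-1)^j\,\mathbf m_0^{-1}\mathbf l_0^{-1}\cdots\mathbf m_{j-1}^{-1}\mathbf l_{j-1}^{-1}\,(s_0+\mathbf l_0+\cdots+\mathbf l_{j-1}), && 1\le j\le n. \end{align*}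
   Context: Let $q,n\in\mathbb N$ and let $a<b$ be real numbers. All matrices are complex; $I_q$, $0_q$ are the $q\times q$ identity and zero matrices. Let $s_0,\dots,s_{2n+1}$ be Hermitian $q\times q$ matrices and set $\widehat s_j:=-ab\,s_j+(a+b)s_{j+1}-s_{j+2}$. Define $H_{1,j}:=(s_{l+k})_{l,k=0}^j$, $H_{2,j}:=(\widehat s_{l+k})_{l,k=0}^{j}$, $K_{1,j}:=(bs_{l+k}-s_{l+k+1})_{l,k=0}^{j}$, $K_{2,j}:=(-as_{l+k}+s_{l+k+1})_{l,k=0}^j$. Standing assumption: $H_{1,n},H_{2,n-1},K_{1,n},K_{2,n}$ are positive definite. Let $T_0:=0_q$ and, for $j\ge1$, let $T_j$ be the $(j+1)\times(j+1)$ block matrix (blocks $q\times q$) with $I_q$ in block positions $(l+1,l)$, $l=0,\dots,j-1$, and $0_q$ elsewhere; $R_j(z):=(I_{(j+1)q}-zT_j)^{-1}$; $v_j:=\mathrm{col}(I_q,0_q,\dots,0_q)\in\mathbb C^{(j+1)q\times q}$. Let $u_{2,0}:=-(a+b)s_0+s_1$, $u_{2,j}:=\mathrm{col}(u_{2,0},-\widehat s_0,\dots,-\widehat s_{j-1})$, $\widetilde u_{1,j}:=\mathrm{col}(s_0,s_1-bs_0,\dots,s_j-bs_{j-1})$; for $j\ge1$, $Y_{2,j}:=\mathrm{col}(\widehat s_j,\dots,\widehat s_{2j-1})$, $\widetilde Y_{1,j}:=\mathrm{col}(bs_j-s_{j+1},\dots,bs_{2j-1}-s_{2j})$. Polynomials: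 $P_{2,0}:=I_q$, $Q_{2,0}(z):=-(u_{2,0}+zs_0)$, $\Gamma_{1,0}:=I_q$, $\Theta_{1,0}:=s_0$; for $j\ge1$: $P_{2,j}(z):=(-Y_{2,j}^*H_{2,j-1}^{-1},I_q)R_j(z)v_j$, $Q_{2,j}(z):=-(-Y_{2,j}^*H_{2,j-1}^{-1},I_q)R_j(z)(u_{2,j}+zv_js_0)$, $\Gamma_{1,j}(z):=(-\widetilde Y_{1,j}^*K_{1,j-1}^{-1},I_q)R_j(z)v_j$, $\Theta_{1,j}(z):=(-\widetilde Y_{1,j}^*K_{1,j-1}^{-1},I_q)R_j(z)\widetilde u_{1,j}$. DSM parameters: $\lambda_j:=(u_{2,j}+av_js_0)^*R_j(a)^*H_{2,j}^{-1}R_j(a)(u_{2,j}+av_js_0)$, $\mu_j:=v_j^*R_j(a)^*K_{1,j}^{-1}R_j(a)v_j$; $\mathbf l_0:=\lambda_0$, $\mathbf l_j:=\lambda_j-\lambda_{j-1}$ ($1\le j\le n-1$); $\mathbf m_0:=\mu_0=(bs_0-s_1)^{-1}$, $\mathbf m_j:=\mu_j-\mu_{j-1}$ ($1\le j\le n$). These matrices are positive definite, in particular invertible. *)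

theory Defs
  imports "Jordan_Normal_Form.Schur_Decomposition"
begin

text \<open>All matrices are complex matrices of the Jordan_Normal_Form library (type complex mat),
  whose dimensions are values; this allows block matrices of size depending on j.\<close>

definition hermitian :: "complex mat \<Rightarrow> bool" where
  "hermitian A \<longleftrightarrow> square_mat A \<and> mat_adjoint A = A"

definition pos_def :: "complex mat \<Rightarrow> bool" where
  "pos_def A \<longleftrightarrow> hermitian A \<and>
     (\<forall>v \<in> carrier_vec (dim_row A). v \<noteq> 0\<^sub>v (dim_row A) \<longrightarrow>
        Re (conjugate v \<bullet> (A *\<^sub>v v)) > 0)"

definition minv :: "complex mat \<Rightarrow> complex mat" where
  "minv A = (SOME B. B \<in> carrier_mat (dim_col A) (dim_row A) \<and>
                     A * B = 1\<^sub>m (dim_row A) \<and> B * A = 1\<^sub>m (dim_col A))"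

definition block_mat :: "nat \<Rightarrow> nat \<Rightarrow> nat \<Rightarrow> (nat \<Rightarrow> nat \<Rightarrow> complex mat) \<Rightarrow> complex mat" where
  "block_mat q m k f = mat (m*q) (k*q) (\<lambda>(i,r). f (i div q) (r div q) $$ (i mod q, r mod q))"

definition block_col :: "nat \<Rightarrow> nat \<Rightarrow> (nat \<Rightarrow> complex mat) \<Rightarrow> complex mat" where
  "block_col q m f = mat (m*q) q (\<lambda>(i,r). f (i div q) $$ (i mod q, r))"

definition hcat :: "complex mat \<Rightarrow> complex mat \<Rightarrow> complex mat" where
  "hcat A B = mat (dim_row A) (dim_col A + dim_col B)
      (\<lambda>(i,r). if r < dim_col A then A $$ (i,r) else B $$ (i, r - dim_col A))"

fun msum :: "nat \<Rightarrow> (nat \<Rightarrow> complex mat) \<Rightarrow> nat \<Rightarrow> complex mat" where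
  "msum q f 0 = 0\<^sub>m q q"
| "msum q f (Suc m) = msum q f m + f m"

definition rsc :: "real \<Rightarrow> complex mat \<Rightarrow> complex mat" where
  "rsc x A = complex_of_real x \<cdot>\<^sub>m A"

definition shat :: "real \<Rightarrow> real \<Rightarrow> (nat \<Rightarrow> complex mat) \<Rightarrow> nat \<Rightarrow> complex mat" where
  "shat a b s j = rsc (-(a*b)) (s j) + rsc (a+b) (s (j+1)) - s (j+2)"

definition H1 :: "nat \<Rightarrow> (nat \<Rightarrow> complex mat) \<Rightarrow> nat \<Rightarrow> complex mat" where
  "H1 q s j = block_mat q (j+1) (j+1) (\<lambda>l k. s (l+k))"

definition H2 :: "nat \<Rightarrow> real \<Rightarrow> real \<Rightarrow> (nat \<Rightarrow> complex mat) \<Rightarrow> nat \<Rightarrow> complex mat" where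
  "H2 q a b s j = block_mat q (j+1) (j+1) (\<lambda>l k. shat a b s (l+k))"

definition K1 :: "nat \<Rightarrow> real \<Rightarrow> (nat \<Rightarrow> complex mat) \<Rightarrow> nat \<Rightarrow> complex mat" where
  "K1 q b s j = block_mat q (j+1) (j+1) (\<lambda>l k. rsc b (s (l+k)) - s (l+k+1))"

definition K2 :: "nat \<Rightarrow> real \<Rightarrow> (nat \<Rightarrow> complex mat) \<Rightarrow> nat \<Rightarrow> complex mat" where
  "K2 q a s j = block_mat q (j+1) (j+1) (\<lambda>l k. rsc (-a) (s (l+k)) + s (l+k+1))"

definition Tm :: "nat \<Rightarrow> nat \<Rightarrow> complex mat" where
  "Tm q j = block_mat q (j+1) (j+1) (\<lambda>l k. if l = k+1 then 1\<^sub>m q else 0\<^sub>m q q)"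

definition Rm :: "nat \<Rightarrow> nat \<Rightarrow> complex \<Rightarrow> complex mat" where
  "Rm q j z = minv (1\<^sub>m ((j+1)*q) - z \<cdot>\<^sub>m Tm q j)"

definition vm :: "nat \<Rightarrow> nat \<Rightarrow> complex mat" where
  "vm q j = block_col q (j+1) (\<lambda>i. if i = 0 then 1\<^sub>m q else 0\<^sub>m q q)"

definition u20 :: "real \<Rightarrow> real \<Rightarrow> (nat \<Rightarrow> complex mat) \<Rightarrow> complex mat" where
  "u20 a b s = rsc (-(a+b)) (s 0) + s 1"

definition u2 :: "nat \<Rightarrow> real \<Rightarrow> real \<Rightarrow> (nat \<Rightarrow> complex mat) \<Rightarrow> nat \<Rightarrow> complex mat" where
  "u2 q a b s j = block_col q (j+1) (\<lambda>i. if i = 0 then u20 a b s else - shat a b s (i-1))"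

definition ut1 :: "nat \<Rightarrow> real \<Rightarrow> (nat \<Rightarrow> complex mat) \<Rightarrow> nat \<Rightarrow> complex mat" where
  "ut1 q b s j = block_col q (j+1) (\<lambda>i. if i = 0 then s 0 else s i - rsc b (s (i-1)))"

definition Y2 :: "nat \<Rightarrow> real \<Rightarrow> real \<Rightarrow> (nat \<Rightarrow> complex mat) \<Rightarrow> nat \<Rightarrow> complex mat" where
  "Y2 q a b s j = block_col q j (\<lambda>i. shat a b s (j+i))"

definition Yt1 :: "nat \<Rightarrow> real \<Rightarrow> (nat \<Rightarrow> complex mat) \<Rightarrow> nat \<Rightarrow> complex mat" where
  "Yt1 q b s j = block_col q j (\<lambda>i. rsc b (s (j+i)) - s (j+i+1))"

definition P2 :: "nat \<Rightarrow> real \<Rightarrow> real \<Rightarrow> (nat \<Rightarrow> complex mat) \<Rightarrow> nat \<Rightarrow> complex \<Rightarrow> complex mat" where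
  "P2 q a b s j z = (if j = 0 then 1\<^sub>m q else
     hcat (- (mat_adjoint (Y2 q a b s j) * minv (H2 q a b s (j-1)))) (1\<^sub>m q)
       * Rm q j z * vm q j)"

definition Q2 :: "nat \<Rightarrow> real \<Rightarrow> real \<Rightarrow> (nat \<Rightarrow> complex mat) \<Rightarrow> nat \<Rightarrow> complex \<Rightarrow> complex mat" where
  "Q2 q a b s j z = (if j = 0 then - (u20 a b s + z \<cdot>\<^sub>m s 0) else
     - (hcat (- (mat_adjoint (Y2 q a b s j) * minv (H2 q a b s (j-1)))) (1\<^sub>m q)
       * Rm q j z * (u2 q a b s j + z \<cdot>\<^sub>m (vm q j * s 0))))"

definition Gamma1 :: "nat \<Rightarrow> real \<Rightarrow> (nat \<Rightarrow> complex mat) \<Rightarrow> nat \<Rightarrow> complex \<Rightarrow> complex mat" where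
  "Gamma1 q b s j z = (if j = 0 then 1\<^sub>m q else
     hcat (- (mat_adjoint (Yt1 q b s j) * minv (K1 q b s (j-1)))) (1\<^sub>m q)
       * Rm q j z * vm q j)"

definition Theta1 :: "nat \<Rightarrow> real \<Rightarrow> (nat \<Rightarrow> complex mat) \<Rightarrow> nat \<Rightarrow> complex \<Rightarrow> complex mat" where
  "Theta1 q b s j z = (if j = 0 then s 0 else
     hcat (- (mat_adjoint (Yt1 q b s j) * minv (K1 q b s (j-1)))) (1\<^sub>m q)
       * Rm q j z * ut1 q b s j)"

definition lam :: "nat \<Rightarrow> real \<Rightarrow> real \<Rightarrow> (nat \<Rightarrow> complex mat) \<Rightarrow> nat \<Rightarrow> complex mat" where
  "lam q a b s j = (let w = Rm q j (complex_of_real a) * (u2 q a b s j + rsc a (vm q j * s 0))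
                    in mat_adjoint w * minv (H2 q a b s j) * w)"

definition mu :: "nat \<Rightarrow> real \<Rightarrow> real \<Rightarrow> (nat \<Rightarrow> complex mat) \<Rightarrow> nat \<Rightarrow> complex mat" where
  "mu q a b s j = (let w = Rm q j (complex_of_real a) * vm q j
                   in mat_adjoint w * minv (K1 q b s j) * w)"

definition lDSM :: "nat \<Rightarrow> real \<Rightarrow> real \<Rightarrow> (nat \<Rightarrow> complex mat) \<Rightarrow> nat \<Rightarrow> complex mat" where
  "lDSM q a b s j = (if j = 0 then lam q a b s 0 else lam q a b s j - lam q a b s (j-1))"

definition mDSM :: "nat \<Rightarrow> real \<Rightarrow> real \<Rightarrow> (nat \<Rightarrow> complex mat) \<Rightarrow> nat \<Rightarrow> complex mat" where
  "mDSM q a b s j = (if j = 0 then mu q a b s 0 else mu q a b s j - mu q a b s (j-1))"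

fun mlprod :: "nat \<Rightarrow> real \<Rightarrow> real \<Rightarrow> (nat \<Rightarrow> complex mat) \<Rightarrow> nat \<Rightarrow> complex mat" where
  "mlprod q a b s 0 = 1\<^sub>m q"
| "mlprod q a b s (Suc j) =
     mlprod q a b s j * minv (mDSM q a b s j) * minv (lDSM q a b s j)"

end

theory Submission imports Defs begin

text \<open>
  Put r_k = b s_k - s_(k+1). Then K1 is the block Hankel matrix of r, and H2 is the block Hankel
  matrix of the shifted sequence r_(k+1) - a r_k. The resolvent R_j(a) maps v_j to the column of
  powers a^i I_q, so \<Gamma>_(1,j)(a) and P_(2,j)(a) are the values at a of the monic orthogonal block
  polynomials of the two kernels, while Q_(2,j)(a) and \<Theta>_(1,j)(a) pair their coefficients with r
  and with the sequence \<sigma> solving \<sigma>_(k+1) - a \<sigma>_k = -r_k. The parameters \<mu>_j and \<lambda>_j are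
  quadratic forms in the inverses of the sections, and a Schur complement step gives
  m_j = \<Gamma>_j(a)^* D_j^(-1) \<Gamma>_j(a) and l_j = Q_j(a)^* E_j^(-1) Q_j(a), where D_j and E_j are the
  norms of the orthogonal polynomials. Summation by parts against the powers a^l converts the
  Hankel kernel of r into the shifted one; this yields Q_j(a) \<Gamma>_j(a)^* = D_j and
  \<Gamma>_(j+1)(a) Q_j(a)^* = -E_j, hence Q_j(a) = \<Gamma>_j(a) m_j^(-1) and \<Gamma>_(j+1)(a) = -Q_j(a) l_j^(-1).
  Induction on j gives the formulas for \<Gamma> and Q. Those for P and \<Theta> follow from
  P_j(a) = Q_j(a) \<mu>_j and \<Theta>_j(a) = \<Gamma>_j(a) (s_0 + \<lambda>_(j-1)), two more summations by parts.

  To avoid bookkeeping of block dimensions, all block matrices are embedded into a single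
  algebra of finitely supported infinite matrices, where a block matrix is a sum of products
  of block units.
\<close>

section \<open>Finitely supported matrices\<close>

definition vanishes_outside :: "(nat \<Rightarrow> nat \<Rightarrow> complex) \<Rightarrow> nat \<Rightarrow> bool" where
  "vanishes_outside f N \<longleftrightarrow> (\<forall>i k. N \<le> i \<or> N \<le> k \<longrightarrow> f i k = 0)"

typedef fsmat = "{f :: nat \<Rightarrow> nat \<Rightarrow> complex. \<exists>N. vanishes_outside f N}"
  morphisms fs_entry Abs_fsmat
  by (rule exI[of _ "\<lambda>i k. 0"], auto simp: vanishes_outside_def)

setup_lifting type_definition_fsmat

lemma vanishes_outside_mono: "vanishes_outside f N \<Longrightarrow> N \<le> M \<Longrightarrow> vanishes_outside f M"
  unfolding vanishes_outside_def by force

lemma fs_entry_vanishes: "\<exists>N. vanishes_outside (fs_entry x) N" using fs_entry by auto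

definition support_size :: "(nat \<Rightarrow> nat \<Rightarrow> complex) \<Rightarrow> nat" where
  "support_size f = (SOME N. vanishes_outside f N)"

lemma support_size: "\<exists>N. vanishes_outside f N \<Longrightarrow> vanishes_outside f (support_size f)"
  unfolding support_size_def by (rule someI_ex)

definition entry_prod :: "(nat \<Rightarrow> nat \<Rightarrow> complex) \<Rightarrow> (nat \<Rightarrow> nat \<Rightarrow> complex) \<Rightarrow> nat \<Rightarrow> nat \<Rightarrow> complex" where
  "entry_prod f g = (\<lambda>i k. \<Sum>t<support_size f. f i t * g t k)"

lemma sum_lessThan_extend:
  assumes "\<And>t. M \<le> t \<Longrightarrow> (g::nat \<Rightarrow> 'a::comm_monoid_add) t = 0" and "M \<le> B"
  shows "sum g {..<B} = sum g {..<M}"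
  by (rule sum.mono_neutral_right, insert assms, auto)

lemma entry_prod_eq:
  assumes "\<exists>N. vanishes_outside f N" and "vanishes_outside f M"
  shows "entry_prod f g i k = (\<Sum>t<M. f i t * g t k)"
proof -
  have b: "vanishes_outside f (support_size f)" using support_size[OF assms(1)] .
  let ?N = "max M (support_size f)"
  have "(\<Sum>t<support_size f. f i t * g t k) = (\<Sum>t<?N. f i t * g t k)"
    by (rule sum_lessThan_extend[symmetric], insert b, auto simp: vanishes_outside_def)
  also have "\<dots> = (\<Sum>t<M. f i t * g t k)"
    by (rule sum_lessThan_extend, insert assms(2), auto simp: vanishes_outside_def)
  finally show ?thesis unfolding entry_prod_def by simp
qed

lemma entry_prod_vanishes: assumes "vanishes_outside f N" "vanishes_outside g N" shows "vanishes_outside (entry_prod f g) N"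
  unfolding vanishes_outside_def
proof (intro allI impI)
  fix i k assume "N \<le> i \<or> N \<le> k"
  thus "entry_prod f g i k = 0"
  proof -
    have e: "\<exists>N. vanishes_outside f N" using assms(1) by blast
    show ?thesis using \<open>N \<le> i \<or> N \<le> k\<close> assms unfolding entry_prod_eq[OF e assms(1)] by (auto simp: vanishes_outside_def)
  qed
qed

lemma vanishes_outside_pointwise:
  assumes "\<exists>N. vanishes_outside f N" "\<exists>N. vanishes_outside g N" and "op 0 0 = 0"
  shows "\<exists>N. vanishes_outside (\<lambda>i k. op (f i k) (g i k)) N"
proof -
  obtain N M where "vanishes_outside f N" "vanishes_outside g M" using assms(1,2) by auto
  then show ?thesis using assms(3)
    by (intro exI[of _ "max N M"]) (auto simp: vanishes_outside_def)
qed

lemma fsmat_eqI: "(\<And>i k. fs_entry x i k = fs_entry y i k) \<Longrightarrow> x = y"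
  by (rule fs_entry_inject[THEN iffD1], auto)

instantiation fsmat :: real_algebra
begin

lift_definition zero_fsmat :: fsmat is "\<lambda>i k. 0" by (auto simp: vanishes_outside_def)

lift_definition plus_fsmat :: "fsmat \<Rightarrow> fsmat \<Rightarrow> fsmat" is "\<lambda>f g i k. f i k + g i k"
  by (rule vanishes_outside_pointwise) simp_all

lift_definition minus_fsmat :: "fsmat \<Rightarrow> fsmat \<Rightarrow> fsmat" is "\<lambda>f g i k. f i k - g i k"
  by (rule vanishes_outside_pointwise) simp_all

lift_definition uminus_fsmat :: "fsmat \<Rightarrow> fsmat" is "\<lambda>f i k. - f i k"
  by (metis (no_types, lifting) vanishes_outside_def neg_equal_0_iff_equal)

lift_definition scaleR_fsmat :: "real \<Rightarrow> fsmat \<Rightarrow> fsmat" is "\<lambda>c f i k. complex_of_real c * f i k"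
  by (metis (no_types, lifting) vanishes_outside_def mult_zero_right)

lift_definition times_fsmat :: "fsmat \<Rightarrow> fsmat \<Rightarrow> fsmat" is entry_prod
proof -
  fix f g :: "nat \<Rightarrow> nat \<Rightarrow> complex" assume "\<exists>N. vanishes_outside f N" "\<exists>N. vanishes_outside g N"
  then obtain N M where "vanishes_outside f N" "vanishes_outside g M" by auto
  hence "vanishes_outside f (max N M)" "vanishes_outside g (max N M)" by (auto intro: vanishes_outside_mono)
  thus "\<exists>N. vanishes_outside (entry_prod f g) N" by (auto intro: entry_prod_vanishes)
qed
instance
proof
  fix x y z :: fsmat and a b :: real
  obtain N1 where b1: "vanishes_outside (fs_entry x) N1" using fs_entry_vanishes by auto
  obtain N2 where b2: "vanishes_outside (fs_entry y) N2" using fs_entry_vanishes by auto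
  obtain N3 where b3: "vanishes_outside (fs_entry z) N3" using fs_entry_vanishes by auto
  define N where "N = max N1 (max N2 N3)"
  have bx: "vanishes_outside (fs_entry x) N" and byy: "vanishes_outside (fs_entry y) N" and bz: "vanishes_outside (fs_entry z) N"
    using b1 b2 b3 unfolding N_def by (auto intro: vanishes_outside_mono)
  have bxy: "vanishes_outside (fs_entry (x*y)) N" using entry_prod_vanishes[OF bx byy] by (simp add: times_fsmat.rep_eq)
  have bxpy: "vanishes_outside (fs_entry (x+y)) N" using bx byy by (auto simp: vanishes_outside_def plus_fsmat.rep_eq)
  have bsx: "vanishes_outside (fs_entry (a *\<^sub>R x)) N" using bx by (auto simp: vanishes_outside_def scaleR_fsmat.rep_eq)
  have me: "\<And>u v. vanishes_outside (fs_entry u) N \<Longrightarrow> fs_entry (u * v) = (\<lambda>i k. \<Sum>t<N. fs_entry u i t * fs_entry v t k)"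
    unfolding times_fsmat.rep_eq by (rule ext, rule ext, rule entry_prod_eq, insert fs_entry_vanishes, auto)
  show "x * y * z = x * (y * z)"
  proof (rule fsmat_eqI)
    fix i k
    have "fs_entry (x*y*z) i k = (\<Sum>t<N. (\<Sum>u<N. fs_entry x i u * fs_entry y u t) * fs_entry z t k)"
      using me[OF bxy] me[OF bx] by simp
    also have "\<dots> = (\<Sum>t<N. \<Sum>u<N. fs_entry x i u * fs_entry y u t * fs_entry z t k)"
      by (simp add: sum_distrib_right)
    also have "\<dots> = (\<Sum>u<N. \<Sum>t<N. fs_entry x i u * fs_entry y u t * fs_entry z t k)"
      by (rule sum.swap)
    also have "\<dots> = (\<Sum>u<N. fs_entry x i u * (\<Sum>t<N. fs_entry y u t * fs_entry z t k))"
      by (simp add: sum_distrib_left mult.assoc)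
    also have "\<dots> = fs_entry (x*(y*z)) i k" using me[OF bx] me[OF byy] by simp
    finally show "fs_entry (x*y*z) i k = fs_entry (x*(y*z)) i k" .
  qed
  show "(x + y) * z = x * z + y * z"
    by (rule fsmat_eqI) (use me[OF bxpy] me[OF bx] me[OF byy] in \<open>simp add: plus_fsmat.rep_eq distrib_right sum.distrib\<close>)
  show "x * (y + z) = x * y + x * z"
    by (rule fsmat_eqI) (use me[OF bx] in \<open>simp add: plus_fsmat.rep_eq distrib_left sum.distrib\<close>)
  show "a *\<^sub>R x * y = a *\<^sub>R (x * y)"
    by (rule fsmat_eqI) (use me[OF bsx] me[OF bx] in \<open>simp add: scaleR_fsmat.rep_eq sum_distrib_left mult.assoc\<close>)
  show "x * a *\<^sub>R y = a *\<^sub>R (x * y)"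
    by (rule fsmat_eqI) (use me[OF bx] in \<open>simp add: scaleR_fsmat.rep_eq sum_distrib_left mult.left_commute\<close>)
qed (simp_all add: fs_entry_inject[symmetric] fun_eq_iff plus_fsmat.rep_eq minus_fsmat.rep_eq uminus_fsmat.rep_eq
   scaleR_fsmat.rep_eq zero_fsmat.rep_eq algebra_simps)

end

lemma fs_entry_times_gen:
  assumes "\<And>t. M \<le> t \<Longrightarrow> fs_entry u i t * fs_entry v t k = 0"
  shows "fs_entry (u*v) i k = (\<Sum>t<M. fs_entry u i t * fs_entry v t k)"
proof -
  obtain N where b: "vanishes_outside (fs_entry u) N" using fs_entry_vanishes by auto
  let ?L = "max N M"
  have bL: "vanishes_outside (fs_entry u) ?L" using b by (rule vanishes_outside_mono) auto
  have "fs_entry (u*v) i k = (\<Sum>t<?L. fs_entry u i t * fs_entry v t k)"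
    unfolding times_fsmat.rep_eq by (rule entry_prod_eq[OF _ bL], insert fs_entry_vanishes, auto)
  also have "\<dots> = (\<Sum>t<M. fs_entry u i t * fs_entry v t k)"
    by (rule sum_lessThan_extend, insert assms, auto)
  finally show ?thesis .
qed

lemma fs_entry_plus[simp]: "fs_entry (x+y) i k = fs_entry x i k + fs_entry y i k" by (simp add: plus_fsmat.rep_eq)

lemma fs_entry_minus[simp]: "fs_entry (x-y) i k = fs_entry x i k - fs_entry y i k" by (simp add: minus_fsmat.rep_eq)

lemma fs_entry_uminus[simp]: "fs_entry (-x) i k = - fs_entry x i k" by (simp add: uminus_fsmat.rep_eq)

lemma fs_entry_zero[simp]: "fs_entry 0 i k = 0" by (simp add: zero_fsmat.rep_eq)

lemma fs_entry_scaleR[simp]: "fs_entry (c *\<^sub>R x) i k = complex_of_real c * fs_entry x i k" by (simp add: scaleR_fsmat.rep_eq)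

lemma fs_entry_sum: "fs_entry (sum f A) i k = (\<Sum>a\<in>A. fs_entry (f a) i k)"
  by (induct A rule: infinite_finite_induct, auto)

lift_definition adj :: "fsmat \<Rightarrow> fsmat" is "\<lambda>f i k. cnj (f k i)"
  by (metis (no_types, lifting) vanishes_outside_def complex_cnj_zero)

lemma fs_entry_adj[simp]: "fs_entry (adj x) i k = cnj (fs_entry x k i)" by (simp add: adj.rep_eq)

lemma adj_adj[simp]: "adj (adj x) = x" by (rule fsmat_eqI, simp)

lemma adj_plus[simp]: "adj (x+y) = adj x + adj y" by (rule fsmat_eqI, simp)

lemma adj_minus[simp]: "adj (x-y) = adj x - adj y" by (rule fsmat_eqI, simp)

lemma adj_uminus[simp]: "adj (-x) = - adj x" by (rule fsmat_eqI, simp)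

lemma adj_zero[simp]: "adj 0 = 0" by (rule fsmat_eqI, simp)

lemma adj_scaleR[simp]: "adj (c *\<^sub>R x) = c *\<^sub>R adj x" by (rule fsmat_eqI, simp)

lemma adj_sum[simp]: "adj (sum f A) = (\<Sum>a\<in>A. adj (f a))"
  by (induct A rule: infinite_finite_induct, auto)

lemma adj_times[simp]: "adj (x*y) = adj y * adj x"
proof (rule fsmat_eqI)
  fix i k
  obtain N1 where b1: "vanishes_outside (fs_entry x) N1" using fs_entry_vanishes by auto
  obtain N2 where b2: "vanishes_outside (fs_entry y) N2" using fs_entry_vanishes by auto
  let ?N = "max N1 N2"
  have "fs_entry (adj (x*y)) i k = cnj (\<Sum>t<?N. fs_entry x k t * fs_entry y t i)"
    by (simp, subst fs_entry_times_gen[of ?N], insert b1, auto simp: vanishes_outside_def)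
  also have "\<dots> = (\<Sum>t<?N. fs_entry (adj y) i t * fs_entry (adj x) t k)"
    by (simp add: mult.commute)
  also have "\<dots> = fs_entry (adj y * adj x) i k"
    by (subst fs_entry_times_gen[of ?N], insert b2, auto simp: vanishes_outside_def)
  finally show "fs_entry (adj (x*y)) i k = fs_entry (adj y * adj x) i k" .
qed

lift_definition of_mat :: "complex mat \<Rightarrow> fsmat" is
  "\<lambda>A i k. if i < dim_row A \<and> k < dim_col A then A $$ (i,k) else 0"
  by (rule_tac x="dim_row mat + dim_col mat" in exI, auto simp: vanishes_outside_def)

lemma fs_entry_of_mat: "fs_entry (of_mat A) i k = (if i < dim_row A \<and> k < dim_col A then A $$ (i,k) else 0)"
  by (simp add: of_mat.rep_eq)

lemma of_mat_mult: assumes "dim_col A = dim_row B" shows "of_mat (A*B) = of_mat A * of_mat B"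
proof (rule fsmat_eqI)
  fix i k
  show "fs_entry (of_mat (A*B)) i k = fs_entry (of_mat A * of_mat B) i k"
    by (subst fs_entry_times_gen[of "dim_col A"], auto simp: fs_entry_of_mat assms scalar_prod_def
       intro!: sum.cong)
qed

lemma of_mat_add: assumes "dim_row A = dim_row B" "dim_col A = dim_col B"
  shows "of_mat (A+B) = of_mat A + of_mat B"
  by (rule fsmat_eqI, auto simp: fs_entry_of_mat assms)

lemma of_mat_minus: assumes "dim_row A = dim_row B" "dim_col A = dim_col B"
  shows "of_mat (A-B) = of_mat A - of_mat B"
  by (rule fsmat_eqI, auto simp: fs_entry_of_mat assms)

lemma of_mat_uminus: "of_mat (-A) = - of_mat A"
  by (rule fsmat_eqI, auto simp: fs_entry_of_mat)

lemma of_mat_smult: "of_mat (complex_of_real c \<cdot>\<^sub>m A) = c *\<^sub>R of_mat A"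
  by (rule fsmat_eqI, auto simp: fs_entry_of_mat)

lemma of_mat_zero: "of_mat (0\<^sub>m n m) = 0"
  by (rule fsmat_eqI, auto simp: fs_entry_of_mat)

lemma mat_adjoint_dims[simp]: "dim_row (mat_adjoint A) = dim_col A" "dim_col (mat_adjoint A) = dim_row A"
  unfolding mat_adjoint_def by auto

lemma mat_adjoint_index[simp]: "i < dim_col A \<Longrightarrow> k < dim_row A \<Longrightarrow> mat_adjoint A $$ (i,k) = cnj (A $$ (k,i))"
  unfolding mat_adjoint_def by (simp add: mat_of_rows_index cols_def)

lemma of_mat_adj: "of_mat (mat_adjoint A) = adj (of_mat A)"
  by (rule fsmat_eqI, auto simp: fs_entry_of_mat)

lemma of_mat_inj: assumes "A \<in> carrier_mat n m" "B \<in> carrier_mat n m" "of_mat A = of_mat B" shows "A = B"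
proof (rule eq_matI)
  fix i k assume "i < dim_row B" "k < dim_col B"
  have "fs_entry (of_mat A) i k = fs_entry (of_mat B) i k" using assms(3) by simp
  thus "A $$ (i,k) = B $$ (i,k)" using assms(1,2) \<open>i < dim_row B\<close> \<open>k < dim_col B\<close>
    by (auto simp: fs_entry_of_mat)
qed (insert assms, auto)

lemma msum_carrier: "(\<And>i. i < m \<Longrightarrow> f i \<in> carrier_mat q q) \<Longrightarrow> msum q f m \<in> carrier_mat q q"
  by (induct m, auto)

lift_definition unit_block :: "nat \<Rightarrow> nat \<Rightarrow> fsmat" is "\<lambda>q l i k. if i = l*q + k \<and> k < q then 1 else 0"
  by (rule_tac x="Suc (nat2*nat1+nat1)" in exI, auto simp: vanishes_outside_def)

definition fs_one :: "nat \<Rightarrow> fsmat" where "fs_one q = of_mat (1\<^sub>m q)"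

lemma fs_entry_unit_block: "fs_entry (unit_block q l) i k = (if i = l*q + k \<and> k < q then 1 else 0)"
  by (simp add: unit_block.rep_eq)

lemma fs_entry_fs_one: "fs_entry (fs_one q) i k = (if i < q \<and> k < q \<and> i = k then 1 else 0)"
  by (auto simp: fs_one_def fs_entry_of_mat)

lemma unit_block_0: "unit_block q 0 = fs_one q"
  by (rule fsmat_eqI, auto simp: fs_entry_unit_block fs_entry_fs_one)

lemma fs_entry_times_unit_block: "fs_entry (x * unit_block q r) i c = (if c < q then fs_entry x i (r*q+c) else 0)"
proof -
  have "fs_entry (x * unit_block q r) i c = (\<Sum>t<r*q+q. fs_entry x i t * fs_entry (unit_block q r) t c)"
    by (rule fs_entry_times_gen, auto simp: fs_entry_unit_block)
  also have "\<dots> = (\<Sum>t<r*q+q. if t = r*q+c then (if c < q then fs_entry x i t else 0) else 0)"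
    by (rule sum.cong, auto simp: fs_entry_unit_block)
  also have "\<dots> = (if c < q then fs_entry x i (r*q+c) else 0)" by (subst sum.delta, auto)
  finally show ?thesis .
qed

lemma fs_entry_unit_block_times: "fs_entry (unit_block q l * x) i c = (if l*q \<le> i \<and> i < l*q+q then fs_entry x (i - l*q) c else 0)"
proof -
  have "fs_entry (unit_block q l * x) i c = (\<Sum>t<q. fs_entry (unit_block q l) i t * fs_entry x t c)"
    by (rule fs_entry_times_gen, auto simp: fs_entry_unit_block)
  also have "\<dots> = (\<Sum>t<q. if t = i - l*q then (if l*q \<le> i then fs_entry x t c else 0) else 0)"
    by (rule sum.cong, auto simp: fs_entry_unit_block)
  also have "\<dots> = (if l*q \<le> i \<and> i < l*q+q then fs_entry x (i - l*q) c else 0)"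
    by (subst sum.delta, auto)
  finally show ?thesis .
qed

lemma fs_entry_times_adj_unit_block: "fs_entry (x * adj (unit_block q r)) i c = (if r*q \<le> c \<and> c < r*q+q then fs_entry x i (c - r*q) else 0)"
proof -
  have "fs_entry (x * adj (unit_block q r)) i c = cnj (fs_entry (unit_block q r * adj x) c i)"
    by (metis adj_adj adj_times fs_entry_adj)
  thus ?thesis by (simp add: fs_entry_unit_block_times)
qed

lemma block_index_unique: assumes "i < q" "c < q" "l*q + i = r*q + (c::nat)" shows "l = r \<and> i = c"
proof -
  have "l = (l*q+i) div q" using assms(1) by simp
  also have "\<dots> = (r*q+c) div q" using assms(3) by simp
  also have "\<dots> = r" using assms(2) by simp
  finally show ?thesis using assms by auto
qed

lemma adj_unit_block_unit_block: "adj (unit_block q l) * unit_block q r = (if l = r then fs_one q else 0)"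
proof (rule fsmat_eqI)
  fix i c
  show "fs_entry (adj (unit_block q l) * unit_block q r) i c = fs_entry (if l = r then fs_one q else 0) i c"
  proof (cases "l = r")
    case True thus ?thesis by (auto simp: fs_entry_times_unit_block fs_entry_unit_block fs_entry_fs_one)
  next
    case False
    have "\<not> (c < q \<and> i < q \<and> r*q + c = l*q + i)" using block_index_unique[of c q i r l] False by auto
    thus ?thesis using False by (auto simp: fs_entry_times_unit_block fs_entry_unit_block fs_entry_fs_one)
  qed
qed

lemma fs_entry_fs_one_times: "fs_entry (fs_one q * x) i c = (if i < q then fs_entry x i c else 0)"
  using fs_entry_unit_block_times[of q 0 x] by (simp add: unit_block_0[symmetric])

lemma fs_entry_times_fs_one: "fs_entry (x * fs_one q) i c = (if c < q then fs_entry x i c else 0)"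
  using fs_entry_times_unit_block[of x q 0] by (simp add: unit_block_0[symmetric])

lemma adj_fs_one: "adj (fs_one q) = fs_one q"
  by (rule fsmat_eqI, auto simp: fs_entry_fs_one)

lemma unit_block_fs_one: "unit_block q l * fs_one q = unit_block q l"
  by (rule fsmat_eqI, auto simp: fs_entry_times_fs_one fs_entry_unit_block)

lemma fs_one_adj_unit_block: "fs_one q * adj (unit_block q l) = adj (unit_block q l)"
  by (rule fsmat_eqI, auto simp: fs_entry_fs_one_times fs_entry_unit_block)

lemma fs_one_fs_one: "fs_one q * fs_one q = fs_one q"
  by (rule fsmat_eqI, auto simp: fs_entry_fs_one_times fs_entry_fs_one)

lemma fs_one_times_of_mat: "A \<in> carrier_mat q n \<Longrightarrow> fs_one q * of_mat A = of_mat A"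
  by (rule fsmat_eqI, auto simp: fs_entry_fs_one_times fs_entry_of_mat)

lemma of_mat_times_fs_one: "A \<in> carrier_mat n q \<Longrightarrow> of_mat A * fs_one q = of_mat A"
  by (rule fsmat_eqI, auto simp: fs_entry_times_fs_one fs_entry_of_mat)

lemma fs_entry_unit_block_sandwich: "fs_entry (unit_block q l * x * adj (unit_block q r)) i c =
   (if l*q \<le> i \<and> i < l*q+q \<and> r*q \<le> c \<and> c < r*q+q then fs_entry x (i - l*q) (c - r*q) else 0)"
  by (simp add: fs_entry_times_adj_unit_block fs_entry_unit_block_times)

lemma sum_block_pick: fixes q m i :: nat assumes q: "0 < q"
  shows "(\<Sum>l<m. if l*q \<le> i \<and> i < l*q+q then (F l :: complex) else 0)
     = (if i < m*q then F (i div q) else 0)"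
proof -
  have "(\<Sum>l<m. if l*q \<le> i \<and> i < l*q+q then F l else 0) = (\<Sum>l<m. if l = i div q then F l else 0)"
  proof (rule sum.cong[OF refl])
    fix l
    have "(l*q \<le> i \<and> i < l*q+q) = (l = i div q)"
    proof
      assume h: "l*q \<le> i \<and> i < l*q+q"
      define x where "x = i - l*q"
      have i: "i = l*q + x" "x < q" using h unfolding x_def by auto
      thus "l = i div q" by simp
    next
      assume "l = i div q"
      moreover have "i = i div q * q + i mod q" by simp
      moreover have "i mod q < q" using q by simp
      ultimately have "i = l*q + i mod q" "i mod q < q" by simp_all
      thus "l*q \<le> i \<and> i < l*q+q" by linarith
    qed
    thus "(if l*q \<le> i \<and> i < l*q+q then F l else 0) = (if l = i div q then F l else 0)" by simp
  qed
  also have "\<dots> = (if i div q < m then F (i div q) else 0)" by (simp add: sum.delta)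
  also have "(i div q < m) = (i < m*q)" by (rule div_less_iff_less_mult[OF q])
  finally show ?thesis .
qed

lemma of_mat_block_mat:
  assumes q: "0 < q" and f: "\<And>l r. l < m \<Longrightarrow> r < k \<Longrightarrow> f l r \<in> carrier_mat q q"
  shows "of_mat (block_mat q m k f) = (\<Sum>l<m. \<Sum>r<k. unit_block q l * of_mat (f l r) * adj (unit_block q r))"
proof (rule fsmat_eqI)
  fix i c
  have "fs_entry (\<Sum>l<m. \<Sum>r<k. unit_block q l * of_mat (f l r) * adj (unit_block q r)) i c
     = (\<Sum>l<m. if l*q \<le> i \<and> i < l*q+q then
          (\<Sum>r<k. if r*q \<le> c \<and> c < r*q+q then fs_entry (of_mat (f l r)) (i - l*q) (c - r*q) else 0) else 0)"
    by (simp add: fs_entry_sum fs_entry_unit_block_sandwich) (rule sum.cong[OF refl], auto)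
  also have "\<dots> = (if i < m*q then (if c < k*q then fs_entry (of_mat (f (i div q) (c div q))) (i - (i div q)*q) (c - (c div q)*q) else 0) else 0)"
    by (simp add: sum_block_pick[OF q])
  also have "\<dots> = fs_entry (of_mat (block_mat q m k f)) i c"
  proof -
    have "i < m*q \<Longrightarrow> i div q < m" "c < k*q \<Longrightarrow> c div q < k" using q
      by (simp_all add: div_less_iff_less_mult)
    moreover have "i mod q < q" "c mod q < q" using q by auto
    moreover have "i < m*q \<Longrightarrow> c < k*q \<Longrightarrow> dim_row (f (i div q) (c div q)) = q \<and> dim_col (f (i div q) (c div q)) = q"
      using f calculation by auto
    ultimately show ?thesis using q
      by (auto simp: fs_entry_of_mat block_mat_def minus_div_mult_eq_mod)
  qed
  finally show "fs_entry (of_mat (block_mat q m k f)) i c = fs_entry (\<Sum>l<m. \<Sum>r<k. unit_block q l * of_mat (f l r) * adj (unit_block q r)) i c" ..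
qed

lemma block_col_mat: "block_col q m f = block_mat q m 1 (\<lambda>l r. f l)"
  unfolding block_col_def block_mat_def by (rule eq_matI, auto)

lemma of_mat_block_col:
  assumes q: "0 < q" and f: "\<And>l. l < m \<Longrightarrow> f l \<in> carrier_mat q q"
  shows "of_mat (block_col q m f) = (\<Sum>l<m. unit_block q l * of_mat (f l))"
proof -
  have "of_mat (block_col q m f) = (\<Sum>l<m. unit_block q l * of_mat (f l) * fs_one q)"
    unfolding block_col_mat by (subst of_mat_block_mat[OF q], insert f, auto simp: unit_block_0 adj_fs_one)
  also have "\<dots> = (\<Sum>l<m. unit_block q l * of_mat (f l))"
    by (intro sum.cong refl) (simp add: mult.assoc of_mat_times_fs_one[OF f])
  finally show ?thesis .
qed

definition block_proj :: "nat \<Rightarrow> nat \<Rightarrow> fsmat" where "block_proj q m = (\<Sum>l<m. unit_block q l * adj (unit_block q l))"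

lemma of_mat_one_block: assumes q: "0 < q" shows "of_mat (1\<^sub>m (m*q)) = block_proj q m"
proof -
  have "1\<^sub>m (m*q) = block_mat q m m (\<lambda>l r. if l = r then 1\<^sub>m q else 0\<^sub>m q q)"
  proof (rule eq_matI)
    fix i c assume "i < dim_row (block_mat q m m (\<lambda>l r. if l = r then 1\<^sub>m q else 0\<^sub>m q q))"
       "c < dim_col (block_mat q m m (\<lambda>l r. if l = r then 1\<^sub>m q else 0\<^sub>m q q))"
    hence ic: "i < m*q" "c < m*q" by (auto simp: block_mat_def)
    have "(i = c) = (i div q = c div q \<and> i mod q = c mod q)"
      by (metis div_mult_mod_eq)
    thus "1\<^sub>m (m * q) $$ (i, c) = block_mat q m m (\<lambda>l r. if l = r then 1\<^sub>m q else 0\<^sub>m q q) $$ (i, c)"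
      using ic q by (auto simp: block_mat_def)
  qed (auto simp: block_mat_def)
  hence "of_mat (1\<^sub>m (m*q)) = (\<Sum>l<m. \<Sum>r<m. unit_block q l * of_mat (if l = r then 1\<^sub>m q else 0\<^sub>m q q) * adj (unit_block q r))"
    using of_mat_block_mat[OF q] by auto
  also have "\<dots> = (\<Sum>l<m. unit_block q l * adj (unit_block q l))"
  proof (rule sum.cong[OF refl])
    fix l assume l: "l \<in> {..<m}"
    have "(\<Sum>r<m. unit_block q l * of_mat (if l = r then 1\<^sub>m q else 0\<^sub>m q q) * adj (unit_block q r))
      = (\<Sum>r<m. if l = r then unit_block q l * adj (unit_block q r) else 0)"
      by (rule sum.cong[OF refl], auto simp: of_mat_zero fs_one_def[symmetric] unit_block_fs_one)
    thus "(\<Sum>r<m. unit_block q l * of_mat (if l = r then 1\<^sub>m q else 0\<^sub>m q q) * adj (unit_block q r)) = unit_block q l * adj (unit_block q l)"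
      using l by (simp add: sum.delta')
  qed
  finally show ?thesis unfolding block_proj_def .
qed

lemma of_mat_hcat: assumes X: "X \<in> carrier_mat q (j*q)"
  shows "of_mat (hcat X (1\<^sub>m q)) = of_mat X + adj (unit_block q j)"
  by (rule fsmat_eqI, insert X, auto simp: fs_entry_of_mat hcat_def fs_entry_unit_block)

lemma of_mat_times_late_unit_block: assumes X: "X \<in> carrier_mat q (j*q)" and "j \<le> k"
  shows "of_mat X * unit_block q k = 0"
proof (rule fsmat_eqI)
  fix i c
  have "j*q \<le> k*q" using assms(2) by (simp add: mult_le_mono1)
  hence "\<not> k*q + c < j*q" by linarith
  thus "fs_entry (of_mat X * unit_block q k) i c = fs_entry 0 i c" using X by (auto simp: fs_entry_times_unit_block fs_entry_of_mat)
qed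

definition corner :: "nat \<Rightarrow> fsmat \<Rightarrow> bool" where "corner q x \<longleftrightarrow> fs_one q * x = x \<and> x * fs_one q = x"

lemma cornerD: "corner q x \<Longrightarrow> fs_one q * x = x" "corner q x \<Longrightarrow> x * fs_one q = x" unfolding corner_def by auto

lemma corner_fs_one: "corner q (fs_one q)" by (simp add: corner_def fs_one_fs_one)

lemma corner_zero: "corner q 0" by (simp add: corner_def)

lemma corner_mult: "corner q x \<Longrightarrow> corner q y \<Longrightarrow> corner q (x*y)"
  unfolding corner_def by (metis mult.assoc)

lemma corner_add: "corner q x \<Longrightarrow> corner q y \<Longrightarrow> corner q (x+y)" unfolding corner_def by (simp add: algebra_simps)

lemma corner_diff: "corner q x \<Longrightarrow> corner q y \<Longrightarrow> corner q (x-y)" unfolding corner_def by (simp add: algebra_simps)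

lemma corner_uminus: "corner q x \<Longrightarrow> corner q (-x)" unfolding corner_def by (simp add: algebra_simps)

lemma corner_scaleR: "corner q x \<Longrightarrow> corner q (c *\<^sub>R x)" unfolding corner_def by simp

lemma corner_adj: "corner q x \<Longrightarrow> corner q (adj x)" unfolding corner_def
  by (metis adj_fs_one adj_times)

lemma corner_sum: "(\<And>k. k \<in> A \<Longrightarrow> corner q (f k)) \<Longrightarrow> corner q (sum f A)"
  unfolding corner_def by (simp add: sum_distrib_left sum_distrib_right)

lemma sum_if_mult: fixes M :: nat shows
  "(\<Sum>l<M. f l * (if l = i then x else (0::'a::semiring_0))) = (if i < M then f i * x else 0)"
  by (induct M) (auto simp: less_Suc_eq)

lemma sum_if_mult2: fixes M :: nat shows
  "(\<Sum>l<M. (if l = i then x else (0::'a::semiring_0)) * f l) = (if i < M then x * f i else 0)"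
  by (induct M) (auto simp: less_Suc_eq)

section \<open>Monic orthogonal block polynomials\<close>

declare sum.lessThan_Suc[simp del]

locale block_kernel =
  fixes q :: nat and h :: "nat \<Rightarrow> nat \<Rightarrow> fsmat"
  assumes kernel_corner: "\<And>l k. corner q (h l k)" and kernel_adj: "\<And>l k. adj (h l k) = h k l"
begin

abbreviation I :: fsmat where "I \<equiv> fs_one q"

definition inverts :: "(nat \<Rightarrow> nat \<Rightarrow> fsmat) \<Rightarrow> nat \<Rightarrow> bool" where
  "inverts Mb m \<longleftrightarrow> (\<forall>l<m. \<forall>i<m. (\<Sum>k<m. Mb l k * h k i) = (if l = i then I else 0))
     \<and> (\<forall>l<m. \<forall>i<m. (\<Sum>k<m. h l k * Mb k i) = (if l = i then I else 0))
     \<and> (\<forall>l<m. \<forall>k<m. corner q (Mb l k))"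

lemma invertsD: assumes "inverts Mb m"
  shows "l < m \<Longrightarrow> i < m \<Longrightarrow> (\<Sum>k<m. Mb l k * h k i) = (if l = i then I else 0)"
    "l < m \<Longrightarrow> i < m \<Longrightarrow> (\<Sum>k<m. h l k * Mb k i) = (if l = i then I else 0)"
    "l < m \<Longrightarrow> k < m \<Longrightarrow> corner q (Mb l k)"
  using assms unfolding inverts_def by auto

text \<open>If \<open>Mb\<close> inverts the \<open>j\<close>-th section of \<open>h\<close>, the blocks \<open>opoly Mb j k\<close> form the row
  \<open>(-Y\<^sup>* Mb, I)\<close> of the paper: the coefficients of the \<open>j\<close>-th monic orthogonal polynomial.\<close>

definition opoly :: "(nat \<Rightarrow> nat \<Rightarrow> fsmat) \<Rightarrow> nat \<Rightarrow> nat \<Rightarrow> fsmat" where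
  "opoly Mb j k = (if k < j then - (\<Sum>l<j. h j l * Mb l k) else if k = j then I else 0)"

definition opoly_norm :: "(nat \<Rightarrow> nat \<Rightarrow> fsmat) \<Rightarrow> nat \<Rightarrow> fsmat" where
  "opoly_norm Mb j = (\<Sum>k<Suc j. opoly Mb j k * h k j)"

definition dual_coeff :: "(nat \<Rightarrow> nat \<Rightarrow> fsmat) \<Rightarrow> nat \<Rightarrow> (nat \<Rightarrow> fsmat) \<Rightarrow> nat \<Rightarrow> fsmat" where
  "dual_coeff Nb m c k = (\<Sum>l<m. adj (c l) * Nb l k)"

definition quad_form :: "(nat \<Rightarrow> nat \<Rightarrow> fsmat) \<Rightarrow> nat \<Rightarrow> (nat \<Rightarrow> fsmat) \<Rightarrow> fsmat" where
  "quad_form Nb m c = (\<Sum>k<m. dual_coeff Nb m c k * c k)"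

lemma opoly_corner: assumes "inverts Mb j" shows "corner q (opoly Mb j k)"
  unfolding opoly_def using invertsD(3)[OF assms]
  by (auto intro!: corner_uminus corner_sum corner_mult kernel_corner simp: corner_fs_one corner_zero)

lemma opoly_norm_corner: "inverts Mb j \<Longrightarrow> corner q (opoly_norm Mb j)"
  unfolding opoly_norm_def by (intro corner_sum corner_mult opoly_corner kernel_corner)

lemma opoly_lead: "opoly Mb j j = I" by (simp add: opoly_def)

lemma opoly_orth: assumes M: "inverts Mb j" and i: "i < j"
  shows "(\<Sum>k<Suc j. opoly Mb j k * h k i) = 0"
proof -
  have "(\<Sum>k<j. (\<Sum>l<j. h j l * Mb l k) * h k i) = (\<Sum>k<j. \<Sum>l<j. h j l * Mb l k * h k i)"
    by (simp add: sum_distrib_right)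
  also have "\<dots> = (\<Sum>l<j. \<Sum>k<j. h j l * Mb l k * h k i)" by (rule sum.swap)
  also have "\<dots> = (\<Sum>l<j. h j l * (\<Sum>k<j. Mb l k * h k i))"
    by (simp add: sum_distrib_left mult.assoc)
  also have "\<dots> = (\<Sum>l<j. h j l * (if l = i then I else 0))"
    by (rule sum.cong, auto simp: invertsD(1)[OF M] i)
  also have "\<dots> = h j i" using i by (simp add: sum_if_mult cornerD[OF kernel_corner])
  finally have e: "(\<Sum>k<j. (\<Sum>l<j. h j l * Mb l k) * h k i) = h j i" .
  have "(\<Sum>k<Suc j. opoly Mb j k * h k i) = (\<Sum>k<j. - (\<Sum>l<j. h j l * Mb l k) * h k i) + I * h j i"
    by (simp add: opoly_def sum.lessThan_Suc)
  also have "\<dots> = 0" using e by (simp add: sum_negf cornerD[OF kernel_corner])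
  finally show ?thesis .
qed

lemma opoly_orth_adj: assumes M: "inverts Mb j" and i: "i < j"
  shows "(\<Sum>k<Suc j. h i k * adj (opoly Mb j k)) = 0"
proof -
  have "adj (\<Sum>k<Suc j. opoly Mb j k * h k i) = 0" using opoly_orth[OF assms] by simp
  thus ?thesis by (simp add: kernel_adj)
qed

lemma opoly_norm_adj_sum:
  shows "(\<Sum>k<Suc j. h j k * adj (opoly Mb j k)) = adj (opoly_norm Mb j)"
  unfolding opoly_norm_def by (simp add: kernel_adj)

lemma opoly_norm_hermitian: assumes M: "inverts Mb j" shows "adj (opoly_norm Mb j) = opoly_norm Mb j"
proof -
  define X where "X = (\<Sum>k<Suc j. \<Sum>l<Suc j. opoly Mb j k * h k l * adj (opoly Mb j l))"
  have "X = (\<Sum>l<Suc j. (\<Sum>k<Suc j. opoly Mb j k * h k l) * adj (opoly Mb j l))"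
    unfolding X_def by (subst sum.swap, simp add: sum_distrib_right)
  also have "\<dots> = (\<Sum>l<Suc j. (if l = j then opoly_norm Mb j else 0) * adj (opoly Mb j l))"
  proof (rule sum.cong[OF refl])
    fix l assume "l \<in> {..<Suc j}"
    thus "(\<Sum>k<Suc j. opoly Mb j k * h k l) * adj (opoly Mb j l) = (if l = j then opoly_norm Mb j else 0) * adj (opoly Mb j l)"
      using opoly_orth[OF M, of l] by (cases "l = j", auto simp: opoly_norm_def)
  qed
  also have "\<dots> = opoly_norm Mb j * adj (opoly Mb j j)" by (simp add: sum_if_mult2)
  also have "\<dots> = opoly_norm Mb j"
    using opoly_norm_corner[OF M] by (simp add: opoly_lead adj_fs_one cornerD)
  finally have X1: "X = opoly_norm Mb j" .
  have "adj X = X" unfolding X_def by (simp add: kernel_adj mult.assoc, rule sum.swap)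
  thus ?thesis using X1 by simp
qed

lemma opoly_norm_mult_last_block: assumes M: "inverts Mb j" and N: "inverts Nb (Suc j)"
  shows "opoly_norm Mb j * Nb j j = I"
proof -
  have "(\<Sum>k<Suc j. opoly Mb j k * (\<Sum>i<Suc j. h k i * Nb i j)) = (\<Sum>k<Suc j. opoly Mb j k * (if k = j then I else 0))"
    by (rule sum.cong[OF refl]) (use invertsD(2)[OF N] in simp)
  also have "\<dots> = I" by (simp add: sum_if_mult opoly_lead fs_one_fs_one)
  finally have e: "(\<Sum>k<Suc j. opoly Mb j k * (\<Sum>i<Suc j. h k i * Nb i j)) = I" .
  have "(\<Sum>k<Suc j. opoly Mb j k * (\<Sum>i<Suc j. h k i * Nb i j)) = (\<Sum>i<Suc j. (\<Sum>k<Suc j. opoly Mb j k * h k i) * Nb i j)"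
    by (simp only: sum_distrib_left sum_distrib_right mult.assoc, rule sum.swap)
  also have "\<dots> = (\<Sum>i<Suc j. (if i = j then opoly_norm Mb j else 0) * Nb i j)"
    by (rule sum.cong[OF refl]) (use opoly_orth[OF M] in \<open>auto simp: opoly_norm_def less_Suc_eq\<close>)
  also have "\<dots> = opoly_norm Mb j * Nb j j" by (simp add: sum_if_mult2)
  finally show ?thesis using e by simp
qed

lemma last_block_mult_opoly_norm: assumes M: "inverts Mb j" and N: "inverts Nb (Suc j)"
  shows "Nb j j * opoly_norm Mb j = I"
proof -
  have "(\<Sum>i<Suc j. Nb j i * (\<Sum>k<Suc j. h i k * adj (opoly Mb j k))) = (\<Sum>k<Suc j. (\<Sum>i<Suc j. Nb j i * h i k) * adj (opoly Mb j k))"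
    by (simp only: sum_distrib_left sum_distrib_right mult.assoc, rule sum.swap)
  also have "\<dots> = (\<Sum>k<Suc j. (if k = j then I else 0) * adj (opoly Mb j k))"
    by (rule sum.cong[OF refl]) (use invertsD(1)[OF N] in auto)
  also have "\<dots> = I" by (simp add: sum_if_mult2 opoly_lead adj_fs_one fs_one_fs_one)
  finally have e: "(\<Sum>i<Suc j. Nb j i * (\<Sum>k<Suc j. h i k * adj (opoly Mb j k))) = I" .
  have "(\<Sum>i<Suc j. Nb j i * (\<Sum>k<Suc j. h i k * adj (opoly Mb j k))) = (\<Sum>i<Suc j. Nb j i * (if i = j then opoly_norm Mb j else 0))"
    by (rule sum.cong[OF refl])
      (use opoly_orth_adj[OF M] opoly_norm_adj_sum[of j Mb] opoly_norm_hermitian[OF M] in \<open>auto simp: less_Suc_eq\<close>)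
  also have "\<dots> = Nb j j * opoly_norm Mb j" by (simp add: sum_if_mult)
  finally show ?thesis using e by simp
qed

lemmas opoly_norm_inverse = opoly_norm_mult_last_block last_block_mult_opoly_norm

lemma dual_coeff_kernel: assumes N: "inverts Nb m" and c: "\<And>k. corner q (c k)" and i: "i < m"
  shows "(\<Sum>k<m. dual_coeff Nb m c k * h k i) = adj (c i)"
proof -
  have "(\<Sum>k<m. dual_coeff Nb m c k * h k i) = (\<Sum>k<m. \<Sum>l<m. adj (c l) * Nb l k * h k i)"
    unfolding dual_coeff_def by (simp add: sum_distrib_right)
  also have "\<dots> = (\<Sum>l<m. adj (c l) * (\<Sum>k<m. Nb l k * h k i))"
    by (subst sum.swap, simp add: sum_distrib_left mult.assoc)
  also have "\<dots> = (\<Sum>l<m. adj (c l) * (if l = i then I else 0))"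
    by (rule sum.cong, auto simp: invertsD(1)[OF N] i)
  also have "\<dots> = adj (c i)" using i cornerD(2)[OF corner_adj[OF c]] by (simp add: sum_if_mult)
  finally show ?thesis .
qed

lemma dual_coeff_corner: assumes N: "inverts Nb m" and c: "\<And>k. corner q (c k)" and k: "k < m"
  shows "corner q (dual_coeff Nb m c k)"
  unfolding dual_coeff_def using invertsD(3)[OF N _ k] by (auto intro!: corner_sum corner_mult corner_adj c)

lemma dual_coeff_unique: assumes N: "inverts Nb m" and c: "\<And>k. corner q (c k)"
  and f: "\<And>k. k < m \<Longrightarrow> corner q (f k)" and fp: "\<And>i. i < m \<Longrightarrow> (\<Sum>k<m. f k * h k i) = adj (c i)"
  and k: "k < m"
  shows "dual_coeff Nb m c k = f k"
proof -
  have "dual_coeff Nb m c k = (\<Sum>l<m. (\<Sum>k'<m. f k' * h k' l) * Nb l k)"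
    unfolding dual_coeff_def by (rule sum.cong, auto simp: fp)
  also have "\<dots> = (\<Sum>k'<m. f k' * (\<Sum>l<m. h k' l * Nb l k))"
    by (simp add: sum_distrib_left sum_distrib_right mult.assoc, rule sum.swap)
  also have "\<dots> = (\<Sum>k'<m. f k' * (if k' = k then I else 0))"
    by (rule sum.cong, auto simp: invertsD(2)[OF N] k)
  also have "\<dots> = f k" using k cornerD(2)[OF f[OF k]] by (simp add: sum_if_mult)
  finally show ?thesis .
qed

lemma quad_form_hermitian: assumes N: "inverts Nb m" and c: "\<And>k. corner q (c k)"
  shows "adj (quad_form Nb m c) = quad_form Nb m c"
proof -
  let ?k = "dual_coeff Nb m c"
  define X where "X = (\<Sum>k<m. \<Sum>l<m. ?k k * h k l * adj (?k l))"
  have "X = (\<Sum>l<m. (\<Sum>k<m. ?k k * h k l) * adj (?k l))"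
    unfolding X_def by (subst sum.swap, simp add: sum_distrib_right)
  also have "\<dots> = (\<Sum>l<m. adj (c l) * adj (?k l))"
    by (rule sum.cong, auto simp: dual_coeff_kernel[OF N c])
  also have "\<dots> = adj (quad_form Nb m c)" unfolding quad_form_def by simp
  finally have X1: "X = adj (quad_form Nb m c)" .
  have "adj X = (\<Sum>k<m. \<Sum>l<m. ?k l * h l k * adj (?k k))"
    unfolding X_def by (simp add: kernel_adj mult.assoc)
  also have "\<dots> = X" unfolding X_def by (rule sum.swap)
  finally have "adj X = X" .
  hence "quad_form Nb m c = adj (quad_form Nb m c)" using X1 by (metis adj_adj)
  thus ?thesis by simp
qed

definition opoly_pair :: "(nat \<Rightarrow> nat \<Rightarrow> fsmat) \<Rightarrow> nat \<Rightarrow> (nat \<Rightarrow> fsmat) \<Rightarrow> fsmat" where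
  "opoly_pair Mb j c = (\<Sum>k<Suc j. opoly Mb j k * c k)"

lemma dual_coeff_kernel_last: assumes M: "inverts Mb j" and c: "\<And>k. corner q (c k)"
  shows "(\<Sum>k<j. dual_coeff Mb j c k * h k j) = - (\<Sum>k<j. adj (c k) * adj (opoly Mb j k))"
proof -
  let ?Z = "\<Sum>k<j. dual_coeff Mb j c k * h k j"
  define X where "X = (\<Sum>k<j. \<Sum>k'<Suc j. dual_coeff Mb j c k * h k k' * adj (opoly Mb j k'))"
  have "X = (\<Sum>k'<Suc j. (\<Sum>k<j. dual_coeff Mb j c k * h k k') * adj (opoly Mb j k'))"
    unfolding X_def by (subst sum.swap, simp add: sum_distrib_right)
  also have "\<dots> = (\<Sum>k'<j. adj (c k') * adj (opoly Mb j k')) + ?Z * adj (opoly Mb j j)"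
    unfolding sum.lessThan_Suc by (simp add: dual_coeff_kernel[OF M c])
  also have "\<dots> = (\<Sum>k'<j. adj (c k') * adj (opoly Mb j k')) + ?Z"
    by (simp add: opoly_lead adj_fs_one sum_distrib_right mult.assoc cornerD(2)[OF kernel_corner])
  finally have X1: "X = (\<Sum>k'<j. adj (c k') * adj (opoly Mb j k')) + ?Z" .
  have "X = (\<Sum>k<j. dual_coeff Mb j c k * (\<Sum>k'<Suc j. h k k' * adj (opoly Mb j k')))"
    unfolding X_def by (simp add: sum_distrib_left mult.assoc)
  also have "\<dots> = 0" by (rule sum.neutral, auto simp: opoly_orth_adj[OF M])
  finally show ?thesis using X1 by (simp add: eq_neg_iff_add_eq_0 add.commute)
qed

lemma dual_coeff_Suc:
  assumes M: "inverts Mb j" and N: "inverts Nb (Suc j)" and c: "\<And>k. corner q (c k)" and k: "k < Suc j"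
  shows "dual_coeff Nb (Suc j) c k
    = (if k < j then dual_coeff Mb j c k else 0) + adj (opoly_pair Mb j c) * Nb j j * opoly Mb j k"
proof -
  let ?b = "opoly_pair Mb j c"
  define f where "f k = (if k < j then dual_coeff Mb j c k else 0) + adj ?b * Nb j j * opoly Mb j k" for k
  have b: "corner q ?b" unfolding opoly_pair_def by (intro corner_sum corner_mult opoly_corner[OF M] c)
  have fq: "corner q (f k)" if "k < Suc j" for k
    unfolding f_def using that
    by (auto intro!: corner_add corner_mult corner_adj b opoly_corner[OF M] dual_coeff_corner[OF M c] invertsD(3)[OF N] simp: corner_zero)
  have fp: "(\<Sum>k<Suc j. f k * h k i) = adj (c i)" if i: "i < Suc j" for i
  proof -
    have "(\<Sum>k<Suc j. f k * h k i) = (\<Sum>k<Suc j. (if k < j then dual_coeff Mb j c k else 0) * h k i)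
        + adj ?b * Nb j j * (\<Sum>k<Suc j. opoly Mb j k * h k i)"
      unfolding f_def by (simp add: distrib_right sum.distrib sum_distrib_left mult.assoc)
    then have e: "(\<Sum>k<Suc j. f k * h k i) = (\<Sum>k<j. dual_coeff Mb j c k * h k i)
        + adj ?b * Nb j j * (\<Sum>k<Suc j. opoly Mb j k * h k i)"
      by (simp add: sum.lessThan_Suc)
    show ?thesis
    proof (cases "i < j")
      case True then show ?thesis using e by (simp add: opoly_orth[OF M] dual_coeff_kernel[OF M c])
    next
      case False
      then have ij: "i = j" using i by simp
      have "adj ?b * Nb j j * (\<Sum>k<Suc j. opoly Mb j k * h k i) = adj ?b"
        using ij opoly_norm_inverse(2)[OF M N] cornerD(2)[OF corner_adj[OF b]] by (simp add: opoly_norm_def mult.assoc)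
      moreover have "adj ?b = (\<Sum>k<j. adj (c k) * adj (opoly Mb j k)) + adj (c j)"
        unfolding opoly_pair_def sum.lessThan_Suc using cornerD(2)[OF corner_adj[OF c]] by (simp add: opoly_lead adj_fs_one)
      ultimately show ?thesis using e ij dual_coeff_kernel_last[OF M c] by simp
    qed
  qed
  show ?thesis using dual_coeff_unique[OF N c fq fp k] unfolding f_def .
qed

lemma quad_form_Suc: assumes M: "inverts Mb j" and N: "inverts Nb (Suc j)" and c: "\<And>k. corner q (c k)"
  shows "quad_form Nb (Suc j) c = quad_form Mb j c + adj (opoly_pair Mb j c) * Nb j j * opoly_pair Mb j c"
proof -
  have "quad_form Nb (Suc j) c = (\<Sum>k<Suc j. ((if k < j then dual_coeff Mb j c k else 0)
      + adj (opoly_pair Mb j c) * Nb j j * opoly Mb j k) * c k)"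
    unfolding quad_form_def by (rule sum.cong) (auto simp: dual_coeff_Suc[OF M N c])
  also have "\<dots> = (\<Sum>k<Suc j. (if k < j then dual_coeff Mb j c k else 0) * c k)
      + adj (opoly_pair Mb j c) * Nb j j * opoly_pair Mb j c"
    unfolding opoly_pair_def by (simp add: distrib_right sum.distrib sum_distrib_left mult.assoc)
  also have "(\<Sum>k<Suc j. (if k < j then dual_coeff Mb j c k else 0) * c k) = quad_form Mb j c"
    unfolding quad_form_def sum.lessThan_Suc by simp
  finally show ?thesis .
qed

end

section \<open>Summation by parts between a Hankel kernel and its shift\<close>

definition geo_tail :: "real \<Rightarrow> (nat \<Rightarrow> 'a::real_vector) \<Rightarrow> nat \<Rightarrow> nat \<Rightarrow> 'a" where
  "geo_tail a g m k = (\<Sum>t<m-k. a^t *\<^sub>R g (Suc (k+t)))"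

lemma geo_tail_Suc: "k \<le> m \<Longrightarrow> geo_tail a g (Suc m) k = geo_tail a g m k + a^(m-k) *\<^sub>R g (Suc m)"
  unfolding geo_tail_def by (simp add: Suc_diff_le sum.lessThan_Suc)

lemma geo_tail_self: "geo_tail a g m m = 0" unfolding geo_tail_def by simp

lemma telescope_geometric: "(\<Sum>k<Suc m. a^(m-k) *\<^sub>R (x (Suc k) - a *\<^sub>R x k)) = x (Suc m) - a^(Suc m) *\<^sub>R (x 0 :: 'a::real_vector)"
proof (induct m)
  case 0 thus ?case by (simp add: sum.lessThan_Suc)
next
  case (Suc m)
  have "(\<Sum>k<Suc (Suc m). a^(Suc m-k) *\<^sub>R (x (Suc k) - a *\<^sub>R x k))
     = (\<Sum>k<Suc m. a *\<^sub>R (a^(m-k) *\<^sub>R (x (Suc k) - a *\<^sub>R x k))) + (x (Suc (Suc m)) - a *\<^sub>R x (Suc m))"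
    unfolding sum.lessThan_Suc[of _ "Suc m"] by (simp add: Suc_diff_le)
  also have "\<dots> = a *\<^sub>R (x (Suc m) - a^(Suc m) *\<^sub>R x 0) + (x (Suc (Suc m)) - a *\<^sub>R x (Suc m))"
    by (subst scaleR_sum_right[symmetric], subst Suc, rule refl)
  also have "\<dots> = x (Suc (Suc m)) - a^(Suc (Suc m)) *\<^sub>R x 0" by (simp add: algebra_simps)
  finally show ?case .
qed

lemma sum_geometric_diff_left: "(\<Sum>i<Suc m. g i * (x i - a^i *\<^sub>R x 0)) = (\<Sum>k<m. geo_tail a g m k * (x (Suc k) - a *\<^sub>R (x k :: 'a::real_algebra)))"
proof (induct m)
  case 0 thus ?case by (simp add: sum.lessThan_Suc)
next
  case (Suc m)
  have "(\<Sum>k<Suc m. geo_tail a g (Suc m) k * (x (Suc k) - a *\<^sub>R x k))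
     = (\<Sum>k<Suc m. geo_tail a g m k * (x (Suc k) - a *\<^sub>R x k)) + (\<Sum>k<Suc m. g (Suc m) * (a^(m-k) *\<^sub>R (x (Suc k) - a *\<^sub>R x k)))"
    by (simp add: geo_tail_Suc distrib_right sum.distrib)
  also have "(\<Sum>k<Suc m. geo_tail a g m k * (x (Suc k) - a *\<^sub>R x k)) = (\<Sum>k<m. geo_tail a g m k * (x (Suc k) - a *\<^sub>R x k))"
    by (simp add: sum.lessThan_Suc geo_tail_self)
  also have "(\<Sum>k<Suc m. g (Suc m) * (a^(m-k) *\<^sub>R (x (Suc k) - a *\<^sub>R x k))) = g (Suc m) * (x (Suc m) - a^(Suc m) *\<^sub>R x 0)"
    by (subst sum_distrib_left[symmetric], subst telescope_geometric, rule refl)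
  finally show ?case using Suc by (simp add: sum.lessThan_Suc[of _ "Suc m"])
qed

lemma sum_geometric_diff_right: "(\<Sum>i<Suc m. (x i - a^i *\<^sub>R x 0) * g i) = (\<Sum>k<m. (x (Suc k) - a *\<^sub>R (x k :: 'a::real_algebra)) * geo_tail a g m k)"
proof (induct m)
  case 0 thus ?case by (simp add: sum.lessThan_Suc)
next
  case (Suc m)
  have "(\<Sum>k<Suc m. (x (Suc k) - a *\<^sub>R x k) * geo_tail a g (Suc m) k)
     = (\<Sum>k<Suc m. (x (Suc k) - a *\<^sub>R x k) * geo_tail a g m k) + (\<Sum>k<Suc m. (a^(m-k) *\<^sub>R (x (Suc k) - a *\<^sub>R x k)) * g (Suc m))"
    by (simp add: geo_tail_Suc distrib_left sum.distrib)
  also have "(\<Sum>k<Suc m. (x (Suc k) - a *\<^sub>R x k) * geo_tail a g m k) = (\<Sum>k<m. (x (Suc k) - a *\<^sub>R x k) * geo_tail a g m k)"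
    by (simp add: sum.lessThan_Suc geo_tail_self)
  also have "(\<Sum>k<Suc m. (a^(m-k) *\<^sub>R (x (Suc k) - a *\<^sub>R x k)) * g (Suc m)) = (x (Suc m) - a^(Suc m) *\<^sub>R x 0) * g (Suc m)"
    by (subst sum_distrib_right[symmetric], subst telescope_geometric, rule refl)
  finally show ?case using Suc by (simp add: sum.lessThan_Suc[of _ "Suc m"])
qed

definition hankel :: "(nat \<Rightarrow> 'a) \<Rightarrow> nat \<Rightarrow> nat \<Rightarrow> 'a" where "hankel r l k = r (l+k)"

definition shifted_hankel :: "real \<Rightarrow> (nat \<Rightarrow> 'a::real_vector) \<Rightarrow> nat \<Rightarrow> nat \<Rightarrow> 'a" where
  "shifted_hankel a r l k = r (Suc (l+k)) - a *\<^sub>R r (l+k)"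

locale hankel_pair =
  fixes q :: nat and r :: "nat \<Rightarrow> fsmat" and a :: real
  assumes r_corner: "\<And>k. corner q (r k)" and r_adj: "\<And>k. adj (r k) = r k"
begin

sublocale K: block_kernel q "hankel r"
  by (unfold_locales, auto simp: hankel_def r_corner r_adj add.commute)

sublocale H: block_kernel q "shifted_hankel a r"
  by (unfold_locales, auto simp: shifted_hankel_def r_corner r_adj add.commute intro!: corner_diff corner_scaleR)

definition K_value :: "(nat \<Rightarrow> nat \<Rightarrow> fsmat) \<Rightarrow> nat \<Rightarrow> fsmat" where
  "K_value Mb j = (\<Sum>l<Suc j. a^l *\<^sub>R K.opoly Mb j l)"

definition H_value :: "(nat \<Rightarrow> nat \<Rightarrow> fsmat) \<Rightarrow> nat \<Rightarrow> fsmat" where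
  "H_value Mb j = (\<Sum>l<Suc j. a^l *\<^sub>R H.opoly Mb j l)"

definition H_moment :: "(nat \<Rightarrow> nat \<Rightarrow> fsmat) \<Rightarrow> nat \<Rightarrow> fsmat" where
  "H_moment Mb j = (\<Sum>k<Suc j. H.opoly Mb j k * r k)"

lemma hankel_geometric_right: "(\<Sum>l<Suc j. hankel r k l * g l) - r k * (\<Sum>l<Suc j. a^l *\<^sub>R g l)
   = (\<Sum>l<j. shifted_hankel a r k l * geo_tail a g j l)"
proof -
  have "(\<Sum>l<Suc j. hankel r k l * g l) - r k * (\<Sum>l<Suc j. a^l *\<^sub>R g l)
      = (\<Sum>l<Suc j. (r (k+l) - a^l *\<^sub>R r (k+0)) * g l)"
    by (simp add: hankel_def sum_distrib_left left_diff_distrib sum_subtractf)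
  also have "\<dots> = (\<Sum>l<j. (r (k + Suc l) - a *\<^sub>R r (k+l)) * geo_tail a g j l)"
    using sum_geometric_diff_right[where x="\<lambda>l. r (k+l)" and g=g and a=a and m=j] by simp
  also have "\<dots> = (\<Sum>l<j. shifted_hankel a r k l * geo_tail a g j l)" by (simp add: shifted_hankel_def)
  finally show ?thesis .
qed

lemma hankel_geometric_left: "(\<Sum>l<Suc j. g l * hankel r l k) - (\<Sum>l<Suc j. a^l *\<^sub>R g l) * r k
   = (\<Sum>l<j. geo_tail a g j l * shifted_hankel a r l k)"
proof -
  have "(\<Sum>l<Suc j. g l * hankel r l k) - (\<Sum>l<Suc j. a^l *\<^sub>R g l) * r k
      = (\<Sum>l<Suc j. g l * (r (l+k) - a^l *\<^sub>R r (0+k)))"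
    by (simp add: hankel_def sum_distrib_right right_diff_distrib sum_subtractf)
  also have "\<dots> = (\<Sum>l<j. geo_tail a g j l * (r (Suc l + k) - a *\<^sub>R r (l+k)))"
    using sum_geometric_diff_left[where x="\<lambda>l. r (l+k)" and g=g and a=a and m=j] by simp
  also have "\<dots> = (\<Sum>l<j. geo_tail a g j l * shifted_hankel a r l k)" by (simp add: shifted_hankel_def)
  finally show ?thesis .
qed

lemma H_moment_adj_K_value: assumes M1: "K.inverts Mb1 j" and M2: "H.inverts Mb2 j"
  shows "H_moment Mb2 j * adj (K_value Mb1 j) = K.opoly_norm Mb1 j"
proof -
  let ?G = "K.opoly Mb1 j" and ?P = "H.opoly Mb2 j"
  define PG where "PG = (\<Sum>k<Suc j. ?P k * (\<Sum>l<Suc j. hankel r k l * adj (?G l)))"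
  have "PG = (\<Sum>k<Suc j. ?P k * (if k = j then adj (K.opoly_norm Mb1 j) else 0))"
    unfolding PG_def
  proof (rule sum.cong[OF refl])
    fix k assume "k \<in> {..<Suc j}"
    thus "?P k * (\<Sum>l<Suc j. hankel r k l * adj (?G l)) = ?P k * (if k = j then adj (K.opoly_norm Mb1 j) else 0)"
      using K.opoly_orth_adj[OF M1, of k] K.opoly_norm_adj_sum[of j Mb1] by (cases "k = j", auto)
  qed
  also have "\<dots> = adj (K.opoly_norm Mb1 j)"
  proof -
    from K.opoly_norm_corner[OF M1] show ?thesis by (simp add: sum_if_mult H.opoly_lead cornerD corner_adj)
  qed
  finally have PG1: "PG = K.opoly_norm Mb1 j" using K.opoly_norm_hermitian[OF M1] by simp
  have "PG - (\<Sum>k<Suc j. ?P k * r k) * adj (\<Sum>l<Suc j. a^l *\<^sub>R ?G l)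
     = (\<Sum>k<Suc j. ?P k * ((\<Sum>l<Suc j. hankel r k l * adj (?G l)) - r k * (\<Sum>l<Suc j. a^l *\<^sub>R adj (?G l))))"
    unfolding PG_def by (simp add: sum_distrib_right right_diff_distrib sum_subtractf mult.assoc)
  also have "\<dots> = (\<Sum>k<Suc j. ?P k * (\<Sum>l<j. shifted_hankel a r k l * geo_tail a (\<lambda>l. adj (?G l)) j l))"
    by (simp add: hankel_geometric_right)
  also have "\<dots> = (\<Sum>l<j. (\<Sum>k<Suc j. ?P k * shifted_hankel a r k l) * geo_tail a (\<lambda>l. adj (?G l)) j l)"
    by (simp add: sum_distrib_left sum_distrib_right mult.assoc, rule sum.swap)
  also have "\<dots> = 0" by (rule sum.neutral, auto simp: H.opoly_orth[OF M2])
  finally show ?thesis unfolding H_moment_def K_value_def using PG1 by simp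
qed

lemma K_value_Suc_adj_H_moment: assumes M1: "K.inverts Mb1 (Suc j)" and M2: "H.inverts Mb2 j"
  shows "K_value Mb1 (Suc j) * adj (H_moment Mb2 j) = - H.opoly_norm Mb2 j"
proof -
  let ?G = "K.opoly Mb1 (Suc j)" and ?P = "H.opoly Mb2 j"
  define GP where "GP = (\<Sum>k<Suc j. (\<Sum>l<Suc (Suc j). ?G l * hankel r l k) * adj (?P k))"
  have GP0: "GP = 0" unfolding GP_def by (rule sum.neutral, auto simp: K.opoly_orth[OF M1])
  have "GP - (\<Sum>l<Suc (Suc j). a^l *\<^sub>R ?G l) * adj (\<Sum>k<Suc j. ?P k * r k)
     = (\<Sum>k<Suc j. ((\<Sum>l<Suc (Suc j). ?G l * hankel r l k) - (\<Sum>l<Suc (Suc j). a^l *\<^sub>R ?G l) * r k) * adj (?P k))"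
    unfolding GP_def by (simp add: sum_distrib_left left_diff_distrib sum_subtractf mult.assoc r_adj)
  also have "\<dots> = (\<Sum>k<Suc j. (\<Sum>l<Suc j. geo_tail a ?G (Suc j) l * shifted_hankel a r l k) * adj (?P k))"
    by (simp add: hankel_geometric_left)
  also have "\<dots> = (\<Sum>l<Suc j. geo_tail a ?G (Suc j) l * (\<Sum>k<Suc j. shifted_hankel a r l k * adj (?P k)))"
    by (simp add: sum_distrib_left sum_distrib_right mult.assoc, rule sum.swap)
  also have "\<dots> = (\<Sum>l<Suc j. geo_tail a ?G (Suc j) l * (if l = j then adj (H.opoly_norm Mb2 j) else 0))"
  proof (rule sum.cong[OF refl])
    fix l assume "l \<in> {..<Suc j}"
    thus "geo_tail a ?G (Suc j) l * (\<Sum>k<Suc j. shifted_hankel a r l k * adj (?P k)) = geo_tail a ?G (Suc j) l * (if l = j then adj (H.opoly_norm Mb2 j) else 0)"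
      using H.opoly_orth_adj[OF M2, of l] H.opoly_norm_adj_sum[of j Mb2] by (cases "l = j", auto)
  qed
  also have "\<dots> = geo_tail a ?G (Suc j) j * adj (H.opoly_norm Mb2 j)" by (simp add: sum_if_mult)
  also have "geo_tail a ?G (Suc j) j = fs_one q" by (simp add: geo_tail_def K.opoly_lead sum.lessThan_Suc)
  also have "fs_one q * adj (H.opoly_norm Mb2 j) = H.opoly_norm Mb2 j"
  proof -
    from H.opoly_norm_corner[OF M2] show ?thesis using H.opoly_norm_hermitian[OF M2] by (simp add: cornerD)
  qed
  finally show ?thesis unfolding H_moment_def K_value_def using GP0 by (simp add: minus_equation_iff)
qed

lemma H_value_eq: assumes N1: "K.inverts Nb (Suc j)" and M2: "H.inverts Mb2 j"
  shows "H_value Mb2 j = H_moment Mb2 j * K.quad_form Nb (Suc j) (\<lambda>k. a^k *\<^sub>R fs_one q)"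
proof -
  let ?P = "H.opoly Mb2 j" and ?c = "\<lambda>k. a^k *\<^sub>R fs_one q"
  let ?k = "K.dual_coeff Nb (Suc j) ?c"
  have cq: "\<And>k. corner q (?c k)" by (intro corner_scaleR corner_fs_one)
  have kq: "\<And>k. k < Suc j \<Longrightarrow> corner q (?k k)" by (rule K.dual_coeff_corner[OF N1 cq])
  have Pq: "\<And>k. corner q (?P k)" by (rule H.opoly_corner[OF M2])
  have mu: "K.quad_form Nb (Suc j) ?c = (\<Sum>k<Suc j. a^k *\<^sub>R ?k k)"
    unfolding K.quad_form_def by (rule sum.cong, auto simp: cornerD[OF kq])
  define KP where "KP = (\<Sum>l<Suc j. (\<Sum>k<Suc j. ?k k * hankel r k l) * adj (?P l))"
  have "KP = (\<Sum>l<Suc j. (a^l *\<^sub>R fs_one q) * adj (?P l))"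
    unfolding KP_def by (rule sum.cong, auto simp: K.dual_coeff_kernel[OF N1 cq] adj_fs_one)
  also have "\<dots> = adj (\<Sum>l<Suc j. a^l *\<^sub>R ?P l)"
    by (simp add: cornerD[OF corner_adj[OF Pq]])
  finally have KP1: "KP = adj (\<Sum>l<Suc j. a^l *\<^sub>R ?P l)" .
  have "KP - K.quad_form Nb (Suc j) ?c * adj (\<Sum>k<Suc j. ?P k * r k)
     = (\<Sum>l<Suc j. ((\<Sum>k<Suc j. ?k k * hankel r k l) - (\<Sum>k<Suc j. a^k *\<^sub>R ?k k) * r l) * adj (?P l))"
    unfolding KP_def mu by (simp add: sum_distrib_left left_diff_distrib sum_subtractf mult.assoc r_adj)
  also have "\<dots> = (\<Sum>l<Suc j. (\<Sum>k<j. geo_tail a ?k j k * shifted_hankel a r k l) * adj (?P l))"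
    by (simp add: hankel_geometric_left)
  also have "\<dots> = (\<Sum>k<j. geo_tail a ?k j k * (\<Sum>l<Suc j. shifted_hankel a r k l * adj (?P l)))"
    by (simp add: sum_distrib_left sum_distrib_right mult.assoc, rule sum.swap)
  also have "\<dots> = 0" by (rule sum.neutral, auto simp: H.opoly_orth_adj[OF M2])
  finally have "adj (\<Sum>l<Suc j. a^l *\<^sub>R ?P l) = K.quad_form Nb (Suc j) ?c * adj (\<Sum>k<Suc j. ?P k * r k)"
    using KP1 by simp
  hence "(\<Sum>l<Suc j. a^l *\<^sub>R ?P l) = adj (K.quad_form Nb (Suc j) ?c * adj (\<Sum>k<Suc j. ?P k * r k))"
    by (metis adj_adj)
  also have "\<dots> = (\<Sum>k<Suc j. ?P k * r k) * K.quad_form Nb (Suc j) ?c"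
    by (simp only: adj_times adj_adj K.quad_form_hermitian[OF N1 cq])
  finally show ?thesis unfolding H_moment_def H_value_def .
qed

lemma K_moment_eq: assumes M1: "K.inverts Mb1 j" and M2: "H.inverts Mb2 j"
  and s0: "\<sigma> 0 = s0" and sr: "\<And>k. k < j \<Longrightarrow> \<sigma> (Suc k) - a *\<^sub>R \<sigma> k = - r k"
  shows "(\<Sum>i<Suc j. K.opoly Mb1 j i * \<sigma> i) = K_value Mb1 j * (s0 + H.quad_form Mb2 j r)"
proof -
  let ?G = "K.opoly Mb1 j" and ?k = "H.dual_coeff Mb2 j r"
  let ?g = "\<Sum>l<Suc j. a^l *\<^sub>R K.opoly Mb1 j l"
  let ?W = "geo_tail a ?G j"
  have "(\<Sum>i<Suc j. ?G i * (\<sigma> i - a^i *\<^sub>R \<sigma> 0)) = (\<Sum>k<j. ?W k * (\<sigma> (Suc k) - a *\<^sub>R \<sigma> k))"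
    by (rule sum_geometric_diff_left)
  also have "\<dots> = - (\<Sum>k<j. ?W k * r k)" by (simp add: sr sum_negf)
  finally have e1: "(\<Sum>i<Suc j. ?G i * \<sigma> i) = ?g * s0 - (\<Sum>k<j. ?W k * r k)"
    by (simp add: s0 right_diff_distrib sum_subtractf sum_distrib_right algebra_simps)
  have rk: "r k = (\<Sum>l<j. shifted_hankel a r k l * adj (?k l))" if "k < j" for k
  proof -
    have "r k = adj (\<Sum>l<j. ?k l * shifted_hankel a r l k)" using H.dual_coeff_kernel[OF M2 r_corner that] by (simp add: r_adj)
    thus ?thesis by (simp add: H.kernel_adj)
  qed
  have "(\<Sum>k<j. ?W k * r k) = (\<Sum>k<j. \<Sum>l<j. ?W k * shifted_hankel a r k l * adj (?k l))"
    by (rule sum.cong, auto simp: rk sum_distrib_left mult.assoc)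
  also have "\<dots> = (\<Sum>l<j. (\<Sum>k<j. ?W k * shifted_hankel a r k l) * adj (?k l))"
    by (subst sum.swap, simp add: sum_distrib_right)
  also have "\<dots> = (\<Sum>l<j. (- (?g * r l)) * adj (?k l))"
  proof (rule sum.cong[OF refl])
    fix l assume l: "l \<in> {..<j}"
    have "(\<Sum>k<j. ?W k * shifted_hankel a r k l) = (\<Sum>i<Suc j. ?G i * hankel r i l) - ?g * r l"
      by (simp add: hankel_geometric_left)
    also have "\<dots> = - (?g * r l)" using K.opoly_orth[OF M1, of l] l by (simp add: hankel_def)
    finally show "(\<Sum>k<j. ?W k * shifted_hankel a r k l) * adj (?k l) = (- (?g * r l)) * adj (?k l)" by simp
  qed
  also have "\<dots> = - (?g * adj (\<Sum>l<j. ?k l * r l))"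
    by (simp add: sum_negf sum_distrib_left mult.assoc r_adj)
  also have "adj (\<Sum>l<j. ?k l * r l) = H.quad_form Mb2 j r"
    using H.quad_form_hermitian[OF M2 r_corner] unfolding H.quad_form_def .
  finally have e2: "(\<Sum>k<j. ?W k * r k) = - (?g * H.quad_form Mb2 j r)" .
  show ?thesis unfolding K_value_def using e1 e2 by (simp add: distrib_left)
qed

end

definition assemble :: "nat \<Rightarrow> (nat \<Rightarrow> nat \<Rightarrow> fsmat) \<Rightarrow> nat \<Rightarrow> fsmat" where
  "assemble q h m = (\<Sum>l<m. \<Sum>k<m. unit_block q l * h l k * adj (unit_block q k))"

lemma assemble_unit_block: assumes h: "\<And>l. corner q (h l i)" and i: "i < m"
  shows "assemble q h m * unit_block q i = (\<Sum>l<m. unit_block q l * h l i)"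
proof -
  have "assemble q h m * unit_block q i = (\<Sum>l<m. \<Sum>k<m. unit_block q l * h l k * (adj (unit_block q k) * unit_block q i))"
    unfolding assemble_def by (simp add: sum_distrib_right mult.assoc)
  also have "\<dots> = (\<Sum>l<m. \<Sum>k<m. (if k = i then unit_block q l * h l k * fs_one q else 0))"
    by (simp add: adj_unit_block_unit_block if_distrib[of "\<lambda>x. _ * x"] cong: if_cong)
  also have "\<dots> = (\<Sum>l<m. unit_block q l * h l i)" using i by (simp add: sum.delta mult.assoc cornerD(2)[OF h])
  finally show ?thesis .
qed

lemma adj_unit_block_assemble: assumes h: "\<And>k. corner q (h i k)" and i: "i < m"
  shows "adj (unit_block q i) * assemble q h m = (\<Sum>k<m. h i k * adj (unit_block q k))"
proof -
  have "adj (unit_block q i) * assemble q h m = (\<Sum>l<m. \<Sum>k<m. (adj (unit_block q i) * unit_block q l) * h l k * adj (unit_block q k))"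
    unfolding assemble_def by (simp add: sum_distrib_left mult.assoc)
  also have "\<dots> = (\<Sum>k<m. \<Sum>l<m. (if l = i then fs_one q * h l k * adj (unit_block q k) else 0))"
    by (subst sum.swap, simp add: adj_unit_block_unit_block if_distrib[of "\<lambda>x. x * _"] cong: if_cong)
  also have "\<dots> = (\<Sum>k<m. h i k * adj (unit_block q k))" using i by (simp add: sum.delta cornerD(1)[OF h])
  finally show ?thesis .
qed

lemma block_proj_unit_block: "i < m \<Longrightarrow> block_proj q m * unit_block q i = unit_block q i"
  unfolding block_proj_def by (simp add: sum_distrib_right mult.assoc adj_unit_block_unit_block if_distrib[of "\<lambda>x. _ * x"]
      sum.delta unit_block_fs_one cong: if_cong)

lemma adj_unit_block_proj: "i < m \<Longrightarrow> adj (unit_block q i) * block_proj q m = adj (unit_block q i)"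
  unfolding block_proj_def by (simp add: sum_distrib_left mult.assoc[symmetric] adj_unit_block_unit_block if_distrib[of "\<lambda>x. x * _"]
      sum.delta' fs_one_adj_unit_block cong: if_cong)

lemma adj_unit_block_proj_unit_block: "l < m \<Longrightarrow> i < m \<Longrightarrow> adj (unit_block q l) * block_proj q m * unit_block q i = (if l = i then fs_one q else 0)"
  by (simp add: adj_unit_block_proj adj_unit_block_unit_block)

lemma corner_adj_unit_block_sandwich: "corner q (adj (unit_block q l) * X * unit_block q k)"
  unfolding corner_def by (simp add: mult.assoc[symmetric] fs_one_adj_unit_block, simp add: mult.assoc unit_block_fs_one)

lemma adj_unit_block_sum: assumes y: "\<And>i. corner q (y i)" and k: "k < m"
  shows "adj (unit_block q k) * (\<Sum>i<m. unit_block q i * y i) = y k"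
proof -
  have "adj (unit_block q k) * (\<Sum>i<m. unit_block q i * y i) = (\<Sum>i<m. if k = i then fs_one q * y i else 0)"
    by (simp add: sum_distrib_left mult.assoc[symmetric] adj_unit_block_unit_block if_distrib[of "\<lambda>x. x * _"] cong: if_cong)
  also have "\<dots> = y k" using k by (simp add: sum.delta' cornerD(1)[OF y])
  finally show ?thesis .
qed

lemma block_proj_sum: "block_proj q m * (\<Sum>i<m. unit_block q i * y i) = (\<Sum>i<m. unit_block q i * y i)"
  by (simp add: sum_distrib_left mult.assoc[symmetric] block_proj_unit_block)

lemma adj_sum_sandwich:
  "adj (\<Sum>i<m. u i * c i) * X * (\<Sum>i<m. u i * c i)
     = (\<Sum>k<m. (\<Sum>l<m. adj (c l) * (adj (u l) * X * u k)) * c k)"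
  by (simp add: sum_distrib_left sum_distrib_right mult.assoc)

context block_kernel begin

lemma inverts_of_mat_inverse:
  assumes X1: "X * assemble q h m = block_proj q m" and X2: "assemble q h m * X = block_proj q m"
  shows "inverts (\<lambda>l k. adj (unit_block q l) * X * unit_block q k) m"
  unfolding inverts_def
proof (intro conjI allI impI)
  fix l i assume l: "l < m" and i: "i < m"
  have "(\<Sum>k<m. adj (unit_block q l) * X * unit_block q k * h k i) = adj (unit_block q l) * X * (assemble q h m * unit_block q i)"
    by (simp add: assemble_unit_block[OF kernel_corner i] sum_distrib_left mult.assoc)
  also have "\<dots> = adj (unit_block q l) * block_proj q m * unit_block q i" using X1 by (metis mult.assoc)
  finally show "(\<Sum>k<m. adj (unit_block q l) * X * unit_block q k * h k i) = (if l = i then I else 0)"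
    using adj_unit_block_proj_unit_block[OF l i] by simp
  have "(\<Sum>k<m. h l k * (adj (unit_block q k) * X * unit_block q i)) = (adj (unit_block q l) * assemble q h m) * X * unit_block q i"
    by (simp add: adj_unit_block_assemble[OF kernel_corner l] sum_distrib_right mult.assoc)
  also have "\<dots> = adj (unit_block q l) * block_proj q m * unit_block q i" using X2 by (simp add: mult.assoc)
  finally show "(\<Sum>k<m. h l k * (adj (unit_block q k) * X * unit_block q i)) = (if l = i then I else 0)"
    using adj_unit_block_proj_unit_block[OF l i] by simp
next
  fix l k show "corner q (adj (unit_block q l) * X * unit_block q k)" by (rule corner_adj_unit_block_sandwich)
qed

lemma of_mat_hcat_opoly:
  assumes Mi: "Mi \<in> carrier_mat (j*q) (j*q)" and Y: "Y \<in> carrier_mat (j*q) q"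
    and eY: "of_mat Y = (\<Sum>l<j. unit_block q l * h l j)" and i: "i \<le> j"
  shows "of_mat (hcat (- (mat_adjoint Y * Mi)) (1\<^sub>m q)) * unit_block q i
     = opoly (\<lambda>l k. adj (unit_block q l) * of_mat Mi * unit_block q k) j i"
proof -
  define X where "X = - (mat_adjoint Y * Mi)"
  have Xc: "X \<in> carrier_mat q (j*q)" unfolding X_def using Mi Y by auto
  have eX: "of_mat X = - ((\<Sum>l<j. h j l * adj (unit_block q l)) * of_mat Mi)"
    unfolding X_def of_mat_uminus using Y Mi by (subst of_mat_mult, auto simp: of_mat_adj eY kernel_adj)
  have "of_mat (hcat X (1\<^sub>m q)) * unit_block q i = of_mat X * unit_block q i + adj (unit_block q j) * unit_block q i"
    by (simp add: of_mat_hcat[OF Xc] distrib_right)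
  also have "\<dots> = opoly (\<lambda>l k. adj (unit_block q l) * of_mat Mi * unit_block q k) j i"
  proof (cases "i = j")
    case True thus ?thesis using of_mat_times_late_unit_block[OF Xc, of j] by (simp add: adj_unit_block_unit_block opoly_lead)
  next
    case False
    hence "i < j" using i by simp
    thus ?thesis using False unfolding eX
      by (simp add: adj_unit_block_unit_block opoly_def sum_distrib_right mult.assoc)
  qed
  finally show ?thesis unfolding X_def .
qed

end

section \<open>Matrix inverses, positivity and the resolvent at \<open>a\<close>\<close>

lemma minv_inverse: assumes A: "A \<in> carrier_mat n n" and B: "B \<in> carrier_mat n n"
  and AB: "A * B = 1\<^sub>m n" and BA: "B * A = 1\<^sub>m n"
  shows "minv A \<in> carrier_mat n n \<and> A * minv A = 1\<^sub>m n \<and> minv A * A = 1\<^sub>m n"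
proof -
  have "\<exists>B. B \<in> carrier_mat (dim_col A) (dim_row A) \<and> A * B = 1\<^sub>m (dim_row A) \<and> B * A = 1\<^sub>m (dim_col A)"
    using A B AB BA by auto
  from someI_ex[OF this] show ?thesis using A unfolding minv_def by auto
qed

lemma minv_inverse_det: assumes A: "(A :: complex mat) \<in> carrier_mat n n" and d: "det A \<noteq> 0"
  shows "minv A \<in> carrier_mat n n \<and> A * minv A = 1\<^sub>m n \<and> minv A * A = 1\<^sub>m n"
proof -
  have "A \<in> Units (ring_mat TYPE(complex) n ())" by (rule det_non_zero_imp_unit[OF A d])
  then obtain B where B: "B \<in> carrier_mat n n" "A * B = 1\<^sub>m n" "B * A = 1\<^sub>m n"
    unfolding Units_def by (auto simp: ring_mat_def)
  show ?thesis by (rule minv_inverse[OF A B])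
qed

lemma mat_adjoint_carrier: "w \<in> carrier_mat N m \<Longrightarrow> mat_adjoint w \<in> carrier_mat m N"
  by (rule carrier_matI, simp_all add: carrier_matD)

lemma of_mat_mult_carrier: "A \<in> carrier_mat n m \<Longrightarrow> B \<in> carrier_mat m k \<Longrightarrow> of_mat (A*B) = of_mat A * of_mat B"
  by (rule of_mat_mult, auto)

lemma of_mat_mult3: "A \<in> carrier_mat n1 n2 \<Longrightarrow> B \<in> carrier_mat n2 n3 \<Longrightarrow> C \<in> carrier_mat n3 n4 \<Longrightarrow>
   of_mat (A * B * C) = of_mat A * of_mat (B * C)"
  by (subst assoc_mult_mat[of A n1 n2 B n3 C n4], auto intro!: of_mat_mult)

lemma of_mat_sandwich: "w \<in> carrier_mat N q \<Longrightarrow> M \<in> carrier_mat N N \<Longrightarrow>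
   of_mat (mat_adjoint w * M * w) = adj (of_mat w) * of_mat M * of_mat w"
proof -
  assume w: "w \<in> carrier_mat N q" and M: "M \<in> carrier_mat N N"
  have aw: "mat_adjoint w \<in> carrier_mat q N" using w by auto
  have "of_mat (mat_adjoint w * M * w) = of_mat (mat_adjoint w * M) * of_mat w"
    by (rule of_mat_mult_carrier[OF _ w], insert aw M, auto)
  also have "of_mat (mat_adjoint w * M) = of_mat (mat_adjoint w) * of_mat M" by (rule of_mat_mult_carrier[OF aw M])
  finally show ?thesis by (simp add: of_mat_adj)
qed

lemma of_mat_minv_block: assumes A: "A \<in> carrier_mat n n" and d: "det A \<noteq> 0" and q: "0 < q" and n: "n = m*q"
  shows "of_mat (minv A) * of_mat A = block_proj q m" "of_mat A * of_mat (minv A) = block_proj q m"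
proof -
  from minv_inverse_det[OF A d] have M: "minv A \<in> carrier_mat n n" "A * minv A = 1\<^sub>m n" "minv A * A = 1\<^sub>m n"
    by auto
  show "of_mat (minv A) * of_mat A = block_proj q m"
    using M A by (simp add: of_mat_mult[symmetric] of_mat_one_block[OF q] n)
  show "of_mat A * of_mat (minv A) = block_proj q m"
    using M A by (simp add: of_mat_mult[symmetric] of_mat_one_block[OF q] n)
qed

lemma corner_of_mat_entries: assumes y: "corner q y" shows "of_mat (mat q q (\<lambda>(i,k). fs_entry y i k)) = y"
proof (rule fsmat_eqI)
  fix i k
  have "fs_entry y i k = fs_entry (fs_one q * y * fs_one q) i k" using y by (simp add: cornerD)
  also have "\<dots> = (if i < q \<and> k < q then fs_entry y i k else 0)" by (simp add: fs_entry_fs_one_times fs_entry_times_fs_one)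
  finally have e: "fs_entry y i k = (if i < q \<and> k < q then fs_entry y i k else 0)" .
  show "fs_entry (of_mat (mat q q (\<lambda>(i,k). fs_entry y i k))) i k = fs_entry y i k"
  proof (cases "i < q \<and> k < q")
    case True thus ?thesis by (simp add: fs_entry_of_mat)
  next
    case False thus ?thesis using e by (auto simp: fs_entry_of_mat)
  qed
qed

lemma of_mat_minv_corner: assumes X: "X \<in> carrier_mat q q" and y: "corner q y"
  and Xy: "of_mat X * y = fs_one q" and yX: "y * of_mat X = fs_one q"
  shows "of_mat (minv X) = y" "minv X \<in> carrier_mat q q"
proof -
  define Y where "Y = mat q q (\<lambda>(i,k). fs_entry y i k)"
  have Yc: "Y \<in> carrier_mat q q" unfolding Y_def by simp
  have eY: "of_mat Y = y" unfolding Y_def by (rule corner_of_mat_entries[OF y])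
  have "X * Y = 1\<^sub>m q"
    by (rule of_mat_inj[of _ q q], insert X Yc, auto simp: of_mat_mult_carrier[OF X Yc] eY Xy fs_one_def)
  moreover have "Y * X = 1\<^sub>m q"
    by (rule of_mat_inj[of _ q q], insert X Yc, auto simp: of_mat_mult_carrier[OF Yc X] eY yX fs_one_def)
  ultimately have M: "minv X \<in> carrier_mat q q" "X * minv X = 1\<^sub>m q" "minv X * X = 1\<^sub>m q"
    using minv_inverse[OF X Yc] by auto
  show "minv X \<in> carrier_mat q q" by (rule M(1))
  have "of_mat (minv X) = of_mat (minv X) * fs_one q" by (simp add: of_mat_times_fs_one[OF M(1)])
  also have "\<dots> = of_mat (minv X * X) * y" using M(1) X by (simp add: Xy[symmetric] of_mat_mult_carrier mult.assoc)
  also have "\<dots> = y" using M(3) y by (simp add: fs_one_def[symmetric] cornerD)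
  finally show "of_mat (minv X) = y" .
qed

definition corner_inverse :: "nat \<Rightarrow> fsmat \<Rightarrow> fsmat \<Rightarrow> bool" where
  "corner_inverse q x y \<longleftrightarrow> corner q y \<and> x * y = fs_one q \<and> y * x = fs_one q"

lemma corner_inverse_uminus: "corner_inverse q x y \<Longrightarrow> corner_inverse q (- x) (- y)"
  unfolding corner_inverse_def by (simp add: corner_uminus)

lemma of_mat_minv_sandwich:
  assumes M: "M \<in> carrier_mat q q" and eM: "of_mat M = adj X * N * X"
    and X: "corner q X" "corner_inverse q X Xi" and N: "corner q N" "corner_inverse q N D"
    and W: "corner q W" "W * adj X = D"
  shows "minv M \<in> carrier_mat q q" "W = X * of_mat (minv M)" "corner_inverse q W (of_mat M * Xi)"
proof -
  have Xi: "corner q Xi" "X * Xi = fs_one q" "Xi * X = fs_one q"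
    and D: "corner q D" "N * D = fs_one q" "D * N = fs_one q"
    using X(2) N(2) unfolding corner_inverse_def by auto
  let ?Mi = "Xi * D * adj Xi"
  have "of_mat M * ?Mi = adj X * (N * (X * Xi) * D) * adj Xi" by (simp add: eM mult.assoc)
  also have "\<dots> = adj (Xi * X)" using Xi(1,2) D(2) N(1) corner_adj[OF X(1)] by (simp add: cornerD)
  finally have MMi: "of_mat M * ?Mi = fs_one q" using Xi(3) by (simp add: adj_fs_one)
  have "?Mi * of_mat M = Xi * (D * adj (X * Xi) * N) * X" by (simp add: eM mult.assoc)
  also have "\<dots> = fs_one q" using Xi D by (simp add: adj_fs_one cornerD)
  finally have MiM: "?Mi * of_mat M = fs_one q" .
  have Mic: "corner q ?Mi" by (intro corner_mult corner_adj Xi(1) D(1))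
  have eMi: "of_mat (minv M) = ?Mi" and "minv M \<in> carrier_mat q q"
    using of_mat_minv_corner[OF M Mic MMi MiM] by auto
  then show "minv M \<in> carrier_mat q q" by simp
  have WM: "W * of_mat M = X" using W(2) D(3) X(1) by (simp add: eM mult.assoc[symmetric] cornerD)
  have "W = W * (of_mat M * ?Mi)" using MMi W(1) by (simp add: cornerD)
  also have "\<dots> = X * ?Mi" using WM by (simp add: mult.assoc[symmetric])
  finally have WX: "W = X * ?Mi" .
  then show "W = X * of_mat (minv M)" using eMi by simp
  have Mc: "corner q (of_mat M)" unfolding eM by (intro corner_mult corner_adj X(1) N(1))
  have "W * (of_mat M * Xi) = X * (?Mi * of_mat M) * Xi" using WX by (simp add: mult.assoc)
  moreover have "of_mat M * Xi * W = of_mat M * (Xi * X) * ?Mi" using WX by (simp add: mult.assoc)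
  ultimately show "corner_inverse q W (of_mat M * Xi)"
    using MiM MMi Xi Mc X(1) unfolding corner_inverse_def by (simp add: cornerD corner_mult)
qed

lemma of_mat_sign: "of_mat (((-1)^j :: complex) \<cdot>\<^sub>m A) = (-1)^j *\<^sub>R of_mat A"
proof -
  have "((-1)^j :: complex) = complex_of_real ((-1)^j)" by simp
  then show ?thesis using of_mat_smult[of "(-1)^j" A] by simp
qed

lemma of_mat_sign_mult:
  assumes "A \<in> carrier_mat q q" "B \<in> carrier_mat q q"
  shows "of_mat (((-1)^j :: complex) \<cdot>\<^sub>m (A * B)) = (-1)^j *\<^sub>R (of_mat A * of_mat B)"
  using of_mat_sign[of j "A * B"] of_mat_mult_carrier[OF assms] by simp

lemma msum_telescope:
  assumes "\<And>i. i \<le> j \<Longrightarrow> f i \<in> carrier_mat q q"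
  shows "msum q (\<lambda>i. if i = 0 then f 0 else f i - f (i - 1)) (Suc j) = f j"
  using assms
proof (induction j)
  case 0 then show ?case by (auto intro!: eq_matI)
next
  case (Suc j)
  have fj: "f j \<in> carrier_mat q q" and fS: "f (Suc j) \<in> carrier_mat q q" using Suc.prems by auto
  have "msum q (\<lambda>i. if i = 0 then f 0 else f i - f (i - 1)) (Suc (Suc j)) = f j + (f (Suc j) - f j)"
    using Suc by simp
  also have "\<dots> = f (Suc j)" using fj fS by (auto intro!: eq_matI)
  finally show ?case .
qed

lemma mult_vec_zero_extend:
  assumes A: "A \<in> carrier_mat N N" and B: "B \<in> carrier_mat m m" and mN: "m \<le> N"
    and eq: "\<And>i k. i < m \<Longrightarrow> k < m \<Longrightarrow> B $$ (i,k) = A $$ (i,k)"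
    and v: "v \<in> carrier_vec m" and i: "i < m"
  shows "(A *\<^sub>v vec N (\<lambda>t. if t < m then v $ t else 0)) $ i = (B *\<^sub>v v) $ i"
proof -
  let ?w = "vec N (\<lambda>t. if t < m then v $ t else 0)"
  have "(A *\<^sub>v ?w) $ i = (\<Sum>t\<in>{0..<N}. A $$ (i,t) * ?w $ t)"
    using A i mN by (simp add: scalar_prod_def)
  also have "\<dots> = (\<Sum>t\<in>{0..<m}. A $$ (i,t) * ?w $ t)"
    by (rule sum.mono_neutral_right) (use mN in auto)
  also have "\<dots> = (\<Sum>t\<in>{0..<m}. B $$ (i,t) * v $ t)"
    by (rule sum.cong) (use mN i eq in auto)
  also have "\<dots> = (B *\<^sub>v v) $ i" using B v i by (simp add: scalar_prod_def)
  finally show ?thesis .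
qed

lemma pos_def_leading_section_det: assumes pd: "pos_def A" and A: "A \<in> carrier_mat N N" and B: "B \<in> carrier_mat m m"
  and mN: "m \<le> N" and eq: "\<And>i k. i < m \<Longrightarrow> k < m \<Longrightarrow> B $$ (i,k) = A $$ (i,k)"
  shows "det B \<noteq> 0"
proof
  assume "det B = 0"
  then obtain v where v: "v \<in> carrier_vec m" "v \<noteq> 0\<^sub>v m" "B *\<^sub>v v = 0\<^sub>v m"
    using det_0_iff_vec_prod_zero[OF B] by auto
  define w where "w = vec N (\<lambda>i. if i < m then v $ i else (0::complex))"
  have w: "w \<in> carrier_vec N" unfolding w_def by simp
  have "w \<noteq> 0\<^sub>v N"
  proof
    assume "w = 0\<^sub>v N"
    have "v $ i = 0" if "i < m" for i
    proof -
      have "w $ i = 0" using \<open>w = 0\<^sub>v N\<close> that mN by simp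
      then show ?thesis using that mN by (simp add: w_def)
    qed
    then show False using v(1,2) by (auto intro: eq_vecI)
  qed
  then have "Re (conjugate w \<bullet> (A *\<^sub>v w)) > 0" using pd w A unfolding pos_def_def by auto
  moreover have "conjugate (w $ i) * (A *\<^sub>v w) $ i = 0" if "i < N" for i
    using mult_vec_zero_extend[OF A B mN eq v(1)] v(3) that unfolding w_def
    by (cases "i < m") auto
  then have "conjugate w \<bullet> (A *\<^sub>v w) = 0"
    using A w unfolding scalar_prod_def by (intro sum.neutral) auto
  ultimately show False by simp
qed

lemma prod_list_ones: "(\<And>x. x \<in> set xs \<Longrightarrow> x = 1) \<Longrightarrow> prod_list xs = (1::'a::monoid_mult)"
  by (induct xs, auto)

lemma Tm_upper_zero: assumes "i \<le> k" "i < (j+1)*q" "k < (j+1)*q"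
  shows "Tm q j $$ (i,k) = 0"
proof -
  have "i div q \<le> k div q" using assms(1) by (rule div_le_mono)
  moreover have "0 < q" using assms(2) by (cases q, auto)
  ultimately show ?thesis using assms unfolding Tm_def block_mat_def by simp
qed

lemma det_one_minus_Tm: "det (1\<^sub>m ((j+1)*q) - z \<cdot>\<^sub>m Tm q j) = 1"
proof -
  define N where "N = (j+1)*q"
  let ?A = "1\<^sub>m N - z \<cdot>\<^sub>m Tm q j"
  have dT: "Tm q j \<in> carrier_mat N N" by (auto simp: Tm_def block_mat_def N_def)
  have c: "?A \<in> carrier_mat N N" using dT by auto
  have fs_entry: "?A $$ (i,k) = (if i = k then 1 else 0)" if "i \<le> k" "i < N" "k < N" for i k
    using that dT Tm_upper_zero[of i k j q] unfolding N_def by simp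
  have "det ?A = prod_list (diag_mat ?A)"
    by (rule det_lower_triangular[OF _ c], subst fs_entry, auto)
  also have "\<dots> = 1"
  proof (rule prod_list_ones)
    fix x assume "x \<in> set (diag_mat ?A)"
    then obtain i where "i < N" "x = ?A $$ (i,i)" using c unfolding diag_mat_def by auto
    thus "x = 1" using fs_entry[of i i] by simp
  qed
  finally show ?thesis unfolding N_def .
qed

lemma of_mat_Tm: assumes q: "0 < q" shows "of_mat (Tm q j) = (\<Sum>k<j. unit_block q (Suc k) * adj (unit_block q k))"
proof -
  have "of_mat (Tm q j) = (\<Sum>l<Suc j. \<Sum>k<Suc j. unit_block q l * of_mat (if l = k+1 then 1\<^sub>m q else 0\<^sub>m q q) * adj (unit_block q k))"
    unfolding Tm_def by (subst of_mat_block_mat[OF q], auto)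
  also have "\<dots> = (\<Sum>l<Suc j. \<Sum>k<Suc j. if l = Suc k then unit_block q l * adj (unit_block q k) else 0)"
    by (intro sum.cong refl, auto simp: of_mat_zero fs_one_def[symmetric] unit_block_fs_one)
  also have "\<dots> = (\<Sum>l<j. \<Sum>k<Suc j. if Suc l = Suc k then unit_block q (Suc l) * adj (unit_block q k) else 0)"
    by (subst sum.lessThan_Suc_shift, simp)
  also have "\<dots> = (\<Sum>l<j. unit_block q (Suc l) * adj (unit_block q l))"
    by (intro sum.cong refl, simp add: sum.delta')
  finally show ?thesis .
qed

lemma Rm_at_a_solve: assumes q: "0 < q" and y: "\<And>i. corner q (y i)"
  and x0: "x 0 = y 0" and xs: "\<And>i. i < j \<Longrightarrow> x (Suc i) = y (Suc i) - a *\<^sub>R y i"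
  shows "of_mat (Rm q j (complex_of_real a)) * (\<Sum>i<Suc j. unit_block q i * x i) = (\<Sum>i<Suc j. unit_block q i * y i)"
proof -
  define A where "A = 1\<^sub>m ((j+1)*q) - complex_of_real a \<cdot>\<^sub>m Tm q j"
  have Ac: "A \<in> carrier_mat ((j+1)*q) ((j+1)*q)" unfolding A_def by (auto simp: Tm_def block_mat_def)
  have dA: "det A \<noteq> 0" unfolding A_def using det_one_minus_Tm[of j q "complex_of_real a"] by simp
  have R: "of_mat (Rm q j (complex_of_real a)) * of_mat A = block_proj q (Suc j)"
    using of_mat_minv_block(1)[OF Ac dA q, of "Suc j"] by (simp add: Rm_def A_def)
  let ?Y = "\<Sum>i<Suc j. unit_block q i * y i"
  have eA: "of_mat A = block_proj q (Suc j) - a *\<^sub>R (\<Sum>k<j. unit_block q (Suc k) * adj (unit_block q k))"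
  proof -
    have Tc: "dim_row (Tm q j) = (j+1)*q" "dim_col (Tm q j) = (j+1)*q" by (auto simp: Tm_def block_mat_def)
    have "of_mat A = of_mat (1\<^sub>m ((j+1)*q)) - of_mat (complex_of_real a \<cdot>\<^sub>m Tm q j)"
      unfolding A_def by (rule of_mat_minus, auto simp: Tc)
    also have "\<dots> = block_proj q (Suc j) - a *\<^sub>R of_mat (Tm q j)"
      using of_mat_one_block[OF q, of "Suc j"] by (simp add: of_mat_smult)
    finally show ?thesis by (simp add: of_mat_Tm[OF q])
  qed
  have TY: "(\<Sum>k<j. unit_block q (Suc k) * adj (unit_block q k)) * ?Y = (\<Sum>k<j. unit_block q (Suc k) * y k)"
    by (simp add: sum_distrib_right mult.assoc adj_unit_block_sum[OF y])
  have "of_mat A * ?Y = ?Y - a *\<^sub>R (\<Sum>k<j. unit_block q (Suc k) * y k)"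
    unfolding eA by (simp add: left_diff_distrib block_proj_sum TY)
  also have "\<dots> = unit_block q 0 * y 0 + (\<Sum>k<j. unit_block q (Suc k) * (y (Suc k) - a *\<^sub>R y k))"
    by (simp add: sum.lessThan_Suc_shift right_diff_distrib sum_subtractf scaleR_sum_right)
  also have "\<dots> = (\<Sum>i<Suc j. unit_block q i * x i)"
    by (simp add: sum.lessThan_Suc_shift x0 xs)
  finally have AY: "of_mat A * ?Y = (\<Sum>i<Suc j. unit_block q i * x i)" .
  have "of_mat (Rm q j (complex_of_real a)) * (\<Sum>i<Suc j. unit_block q i * x i) = block_proj q (Suc j) * ?Y"
    by (simp add: AY[symmetric] mult.assoc[symmetric] R)
  also have "\<dots> = ?Y" by (rule block_proj_sum)
  finally show ?thesis .
qed

section \<open>The polynomials of the moment problem at \<open>a\<close>\<close>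

locale dsm_setting =
  fixes q n :: nat and a b :: real and s :: "nat \<Rightarrow> complex mat"
  assumes q1: "q \<ge> 1" and n1: "n \<ge> 1"
    and sc: "\<And>j. j \<le> 2*n+1 \<Longrightarrow> s j \<in> carrier_mat q q \<and> hermitian (s j)"
    and pdH: "pos_def (H2 q a b s (n-1))" and pdK: "pos_def (K1 q b s n)"
begin

lemma q_pos: "0 < q" using q1 by simp

definition sf :: "nat \<Rightarrow> fsmat" where "sf k = of_mat (s k)"

lemma s_carrier: "k \<le> 2*n+1 \<Longrightarrow> s k \<in> carrier_mat q q" using sc by auto

lemma sf_corner: "k \<le> 2*n+1 \<Longrightarrow> corner q (sf k)"
  unfolding sf_def corner_def by (simp add: fs_one_times_of_mat[OF s_carrier] of_mat_times_fs_one[OF s_carrier])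

lemma sf_adj: "k \<le> 2*n+1 \<Longrightarrow> adj (sf k) = sf k"
  unfolding sf_def using sc[of k] by (simp add: of_mat_adj[symmetric] hermitian_def)

text \<open>Cut off beyond the given data so that \<open>rseq\<close> satisfies the \<open>hankel_pair\<close> axioms for all \<open>k\<close>.\<close>

definition rseq :: "nat \<Rightarrow> fsmat" where
  "rseq k = (if k \<le> 2*n then b *\<^sub>R sf k - sf (Suc k) else 0)"

lemma of_mat_rsc_diff: "k \<le> 2*n \<Longrightarrow> of_mat (rsc b (s k) - s (Suc k)) = rseq k"
proof -
  assume k: "k \<le> 2*n"
  have c: "s k \<in> carrier_mat q q" "s (k+1) \<in> carrier_mat q q" using s_carrier k by auto
  thus ?thesis using k unfolding rseq_def sf_def rsc_def
    by (subst of_mat_minus, auto simp: of_mat_smult)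
qed

lemma rseq_corner: "corner q (rseq k)"
  unfolding rseq_def by (auto intro!: corner_diff corner_scaleR sf_corner simp: corner_zero)

lemma rseq_adj: "adj (rseq k) = rseq k"
  unfolding rseq_def by (auto simp: sf_adj)

sublocale hp: hankel_pair q rseq a by (unfold_locales, rule rseq_corner, rule rseq_adj)

lemma of_mat_shat: "m \<le> 2*n - 1 \<Longrightarrow> of_mat (shat a b s m) = shifted_hankel a rseq 0 m"
proof -
  assume m: "m \<le> 2*n - 1"
  have c: "s m \<in> carrier_mat q q" "s (m+1) \<in> carrier_mat q q" "s (m+2) \<in> carrier_mat q q"
    using s_carrier m n1 by auto
  have e1: "of_mat (rsc (-(a*b)) (s m)) = (-(a*b)) *\<^sub>R sf m" unfolding rsc_def sf_def by (rule of_mat_smult)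
  have e2: "of_mat (rsc (a+b) (s (Suc m))) = (a+b) *\<^sub>R sf (Suc m)"
    unfolding rsc_def sf_def by (rule of_mat_smult)
  have c2: "rsc (-(a*b)) (s m) \<in> carrier_mat q q" "rsc (a+b) (s (Suc m)) \<in> carrier_mat q q"
    using c unfolding rsc_def by auto
  have "of_mat (shat a b s m) = of_mat (rsc (-(a*b)) (s m) + rsc (a+b) (s (Suc m))) - of_mat (s (m+2))"
    unfolding shat_def using c c2 by (subst of_mat_minus, auto)
  also have "\<dots> = (-(a*b)) *\<^sub>R sf m + (a+b) *\<^sub>R sf (Suc m) - sf (Suc (Suc m))"
    using c2 by (subst of_mat_add, auto simp: e1 e2 sf_def)
  finally have "of_mat (shat a b s m) = (-(a*b)) *\<^sub>R sf m + (a+b) *\<^sub>R sf (Suc m) - sf (Suc (Suc m))" .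
  also have "\<dots> = shifted_hankel a rseq 0 m"
  proof -
    have "m \<le> 2*n" "Suc m \<le> 2*n" using m n1 by auto
    thus ?thesis unfolding shifted_hankel_def rseq_def by (simp add: algebra_simps)
  qed
  finally show ?thesis .
qed

lemma of_mat_K1: assumes j: "j \<le> n" shows "of_mat (K1 q b s j) = assemble q (hankel rseq) (Suc j)"
proof -
  have "of_mat (K1 q b s j) = (\<Sum>l<Suc j. \<Sum>k<Suc j. unit_block q l * of_mat (rsc b (s (l+k)) - s (l+k+1)) * adj (unit_block q k))"
  proof (unfold K1_def, subst of_mat_block_mat[OF q_pos])
    fix l r assume "l < j+1" "r < j+1"
    hence "l + r + 1 \<le> 2*n+1" "l+r \<le> 2*n+1" using j by auto
    thus "rsc b (s (l+r)) - s (l+r+1) \<in> carrier_mat q q" using s_carrier unfolding rsc_def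
      by (intro minus_carrier_mat smult_carrier_mat, auto)
  qed simp
  also have "\<dots> = assemble q (hankel rseq) (Suc j)"
    unfolding assemble_def hankel_def using j by (intro sum.cong refl, simp add: of_mat_rsc_diff)
  finally show ?thesis .
qed

lemma of_mat_H2: assumes j: "j \<le> n - 1" shows "of_mat (H2 q a b s j) = assemble q (shifted_hankel a rseq) (Suc j)"
proof -
  have "of_mat (H2 q a b s j) = (\<Sum>l<Suc j. \<Sum>k<Suc j. unit_block q l * of_mat (shat a b s (l+k)) * adj (unit_block q k))"
  proof (unfold H2_def, subst of_mat_block_mat[OF q_pos])
    fix l r assume "l < j+1" "r < j+1"
    hence "l + r + 2 \<le> 2*n+1" using j n1 by auto
    thus "shat a b s (l+r) \<in> carrier_mat q q" using s_carrier unfolding shat_def rsc_def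
      by (intro minus_carrier_mat add_carrier_mat smult_carrier_mat, auto)
  qed simp
  also have "\<dots> = assemble q (shifted_hankel a rseq) (Suc j)"
    unfolding assemble_def using j n1 by (intro sum.cong refl, simp add: of_mat_shat shifted_hankel_def)
  finally show ?thesis .
qed

lemma K1_carrier: "K1 q b s j \<in> carrier_mat ((j+1)*q) ((j+1)*q)" by (simp add: K1_def block_mat_def)

lemma H2_carrier: "H2 q a b s j \<in> carrier_mat ((j+1)*q) ((j+1)*q)" by (simp add: H2_def block_mat_def)

lemma det_K1: assumes j: "j \<le> n" shows "det (K1 q b s j) \<noteq> 0"
proof (rule pos_def_leading_section_det[OF pdK K1_carrier K1_carrier])
  show "(j+1)*q \<le> (n+1)*q" using j by simp
  fix i k assume ik: "i < (j+1)*q" "k < (j+1)*q"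
  have "(j+1)*q \<le> (n+1)*q" using j by simp
  hence "i < (n+1)*q" "k < (n+1)*q" using ik by linarith+
  thus "K1 q b s j $$ (i,k) = K1 q b s n $$ (i,k)" using ik by (simp add: K1_def block_mat_def)
qed

lemma det_H2: assumes j: "j \<le> n - 1" shows "det (H2 q a b s j) \<noteq> 0"
proof (rule pos_def_leading_section_det[OF pdH H2_carrier H2_carrier])
  show "(j+1)*q \<le> (n-1+1)*q" using j by simp
  fix i k assume ik: "i < (j+1)*q" "k < (j+1)*q"
  have "(j+1)*q \<le> (n-1+1)*q" using j by simp
  hence "i < (n-1+1)*q" "k < (n-1+1)*q" using ik by linarith+
  thus "H2 q a b s j $$ (i,k) = H2 q a b s (n-1) $$ (i,k)" using ik by (simp add: H2_def block_mat_def)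
qed

definition invK :: "nat \<Rightarrow> nat \<Rightarrow> nat \<Rightarrow> fsmat" where
  "invK j l k = adj (unit_block q l) * of_mat (minv (K1 q b s j)) * unit_block q k"

definition invH :: "nat \<Rightarrow> nat \<Rightarrow> nat \<Rightarrow> fsmat" where
  "invH j l k = adj (unit_block q l) * of_mat (minv (H2 q a b s j)) * unit_block q k"

lemma inverts_invK: assumes j: "j \<le> n" shows "hp.K.inverts (invK j) (Suc j)"
  unfolding invK_def
proof (rule hp.K.inverts_of_mat_inverse)
  have m: "of_mat (minv (K1 q b s j)) * of_mat (K1 q b s j) = block_proj q (Suc j)"
          "of_mat (K1 q b s j) * of_mat (minv (K1 q b s j)) = block_proj q (Suc j)"
    using of_mat_minv_block[OF K1_carrier det_K1[OF j] q_pos, of "Suc j"] by auto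
  thus "of_mat (minv (K1 q b s j)) * assemble q (hankel rseq) (Suc j) = block_proj q (Suc j)"
       "assemble q (hankel rseq) (Suc j) * of_mat (minv (K1 q b s j)) = block_proj q (Suc j)"
    by (simp_all add: of_mat_K1[OF j])
qed

lemma inverts_invH: assumes j: "j \<le> n - 1" shows "hp.H.inverts (invH j) (Suc j)"
  unfolding invH_def
proof (rule hp.H.inverts_of_mat_inverse)
  have m: "of_mat (minv (H2 q a b s j)) * of_mat (H2 q a b s j) = block_proj q (Suc j)"
          "of_mat (H2 q a b s j) * of_mat (minv (H2 q a b s j)) = block_proj q (Suc j)"
    using of_mat_minv_block[OF H2_carrier det_H2[OF j] q_pos, of "Suc j"] by auto
  thus "of_mat (minv (H2 q a b s j)) * assemble q (shifted_hankel a rseq) (Suc j) = block_proj q (Suc j)"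
       "assemble q (shifted_hankel a rseq) (Suc j) * of_mat (minv (H2 q a b s j)) = block_proj q (Suc j)"
    by (simp_all add: of_mat_H2[OF j])
qed

abbreviation za :: complex where "za \<equiv> complex_of_real a"

lemma Rm_carrier: "Rm q j za \<in> carrier_mat ((j+1)*q) ((j+1)*q)"
proof -
  have Ac: "1\<^sub>m ((j+1)*q) - za \<cdot>\<^sub>m Tm q j \<in> carrier_mat ((j+1)*q) ((j+1)*q)"
    by (auto simp: Tm_def block_mat_def)
  have "det (1\<^sub>m ((j+1)*q) - za \<cdot>\<^sub>m Tm q j) \<noteq> 0" using det_one_minus_Tm[of j q za] by simp
  thus ?thesis using minv_inverse_det[OF Ac] unfolding Rm_def by auto
qed

lemma vm_carrier: "vm q j \<in> carrier_mat ((j+1)*q) q" by (simp add: vm_def block_col_def)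

lemma u2_carrier: "u2 q a b s j \<in> carrier_mat ((j+1)*q) q" by (simp add: u2_def block_col_def)

lemma ut1_carrier: "ut1 q b s j \<in> carrier_mat ((j+1)*q) q" by (simp add: ut1_def block_col_def)

lemma of_mat_vm: "of_mat (vm q j) = (\<Sum>i<Suc j. unit_block q i * (if i = 0 then fs_one q else 0))"
  unfolding vm_def by (subst of_mat_block_col[OF q_pos], auto intro!: sum.cong simp: fs_one_def of_mat_zero)

lemma of_mat_Rm_vm: "of_mat (Rm q j za * vm q j) = (\<Sum>i<Suc j. unit_block q i * (a^i *\<^sub>R fs_one q))"
proof -
  have "of_mat (Rm q j za * vm q j) = of_mat (Rm q j za) * of_mat (vm q j)"
    by (rule of_mat_mult_carrier[OF Rm_carrier vm_carrier])
  also have "\<dots> = (\<Sum>i<Suc j. unit_block q i * (a^i *\<^sub>R fs_one q))"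
    unfolding of_mat_vm by (rule Rm_at_a_solve[OF q_pos], auto intro!: corner_scaleR corner_fs_one)
  finally show ?thesis .
qed

lemma of_mat_u20: "of_mat (u20 a b s) + a *\<^sub>R sf 0 = - rseq 0"
proof -
  have c: "s 0 \<in> carrier_mat q q" "s 1 \<in> carrier_mat q q" using s_carrier by auto
  have e: "of_mat (rsc (-(a+b)) (s 0)) = (-(a+b)) *\<^sub>R sf 0" unfolding rsc_def sf_def by (rule of_mat_smult)
  have "of_mat (u20 a b s) = of_mat (rsc (-(a+b)) (s 0)) + of_mat (s 1)"
    unfolding u20_def by (rule of_mat_add, insert c, auto simp: rsc_def)
  also have "\<dots> = (-(a+b)) *\<^sub>R sf 0 + sf 1" by (simp only: e sf_def)
  finally have "of_mat (u20 a b s) = (-(a+b)) *\<^sub>R sf 0 + sf 1" .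
  thus ?thesis unfolding rseq_def by (simp add: algebra_simps)
qed

lemma u2_vm_carrier: "u2 q a b s j + za \<cdot>\<^sub>m (vm q j * s 0) \<in> carrier_mat ((j+1)*q) q"
proof -
  have s0: "s 0 \<in> carrier_mat q q" using s_carrier by auto
  show ?thesis using u2_carrier[of j] vm_carrier[of j] s0 by (intro add_carrier_mat smult_carrier_mat mult_carrier_mat, auto)
qed

lemma of_mat_u2_vm: assumes j: "j \<le> n"
  shows "of_mat (u2 q a b s j + za \<cdot>\<^sub>m (vm q j * s 0))
    = (\<Sum>i<Suc j. unit_block q i * (if i = 0 then - rseq 0 else - of_mat (shat a b s (i-1))))"
proof -
  have s0: "s 0 \<in> carrier_mat q q" using s_carrier by auto
  have c1: "(if i = 0 then u20 a b s else - shat a b s (i-1)) \<in> carrier_mat q q" if "i < j+1" for i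
  proof -
    have "i - 1 + 2 \<le> 2*n+1" using that j n1 by auto
    then have "s (i-1) \<in> carrier_mat q q" "s (i-1+1) \<in> carrier_mat q q" "s (i-1+2) \<in> carrier_mat q q"
      using s_carrier by auto
    moreover have "s 1 \<in> carrier_mat q q" using s_carrier by auto
    ultimately show ?thesis using s0 unfolding u20_def shat_def rsc_def by auto
  qed
  have eu: "of_mat (u2 q a b s j) = (\<Sum>i<Suc j. unit_block q i * of_mat (if i = 0 then u20 a b s else - shat a b s (i-1)))"
    unfolding u2_def by (subst of_mat_block_col[OF q_pos], insert c1, auto)
  have ev: "of_mat (vm q j * s 0) = (\<Sum>i<Suc j. unit_block q i * (if i = 0 then sf 0 else 0))"
    using of_mat_mult_carrier[OF vm_carrier s0] unfolding of_mat_vm sf_def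
    by (simp add: sum_distrib_right mult.assoc if_distrib[of "\<lambda>x. x * _"] fs_one_times_of_mat[OF s0] cong: if_cong)
  have "of_mat (u2 q a b s j + za \<cdot>\<^sub>m (vm q j * s 0)) = of_mat (u2 q a b s j) + a *\<^sub>R of_mat (vm q j * s 0)"
    using u2_carrier[of j] vm_carrier[of j] s0 by (subst of_mat_add) (auto simp: of_mat_smult)
  also have "\<dots> = (\<Sum>i<Suc j. unit_block q i * (if i = 0 then of_mat (u20 a b s) + a *\<^sub>R sf 0 else - of_mat (shat a b s (i-1))))"
    unfolding eu ev scaleR_sum_right sum.distrib[symmetric]
    by (intro sum.cong refl, auto simp: distrib_left of_mat_uminus)
  finally show ?thesis unfolding of_mat_u20 .
qed

lemma of_mat_Rm_u2: assumes j: "j \<le> n"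
  shows "of_mat (Rm q j za * (u2 q a b s j + za \<cdot>\<^sub>m (vm q j * s 0))) = (\<Sum>i<Suc j. unit_block q i * (- rseq i))"
  unfolding of_mat_mult_carrier[OF Rm_carrier u2_vm_carrier] of_mat_u2_vm[OF j]
proof (rule Rm_at_a_solve[OF q_pos])
  show "\<And>i. corner q (- rseq i)" by (intro corner_uminus rseq_corner)
  fix i assume "i < j"
  then have "i \<le> 2*n - 1" using j n1 by auto
  then show "(if Suc i = 0 then - rseq 0 else - of_mat (shat a b s (Suc i - 1))) = - rseq (Suc i) - a *\<^sub>R (- rseq i)"
    by (simp add: of_mat_shat shifted_hankel_def)
qed simp

primrec sigma :: "nat \<Rightarrow> fsmat" where
  "sigma 0 = sf 0"
| "sigma (Suc i) = a *\<^sub>R sigma i - rseq i"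

lemma sigma_corner: "corner q (sigma i)"
  by (induct i, auto intro!: corner_diff corner_scaleR rseq_corner sf_corner)

lemma of_mat_Rm_ut1: assumes j: "j \<le> n"
  shows "of_mat (Rm q j za * ut1 q b s j) = (\<Sum>i<Suc j. unit_block q i * sigma i)"
proof -
  define x where "x i = of_mat (if i = 0 then s 0 else s i - rsc b (s (i-1)))" for i
  have c1: "(if i = 0 then s 0 else s i - rsc b (s (i-1))) \<in> carrier_mat q q" if "i < j+1" for i
  proof -
    have "i \<le> 2*n+1" "i - 1 \<le> 2*n+1" using that j by auto
    hence "s i \<in> carrier_mat q q" "s (i-1) \<in> carrier_mat q q" using s_carrier by auto
    thus ?thesis unfolding rsc_def by (auto intro!: minus_carrier_mat smult_carrier_mat)
  qed
  have eu: "of_mat (ut1 q b s j) = (\<Sum>i<Suc j. unit_block q i * x i)"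
    unfolding ut1_def x_def by (subst of_mat_block_col[OF q_pos], insert c1, auto)
  have "of_mat (Rm q j za * ut1 q b s j) = of_mat (Rm q j za) * (\<Sum>i<Suc j. unit_block q i * x i)"
    using of_mat_mult_carrier[OF Rm_carrier ut1_carrier] eu by simp
  also have "\<dots> = (\<Sum>i<Suc j. unit_block q i * sigma i)"
  proof (rule Rm_at_a_solve[OF q_pos])
    show "\<And>i. corner q (sigma i)" by (rule sigma_corner)
    show "x 0 = sigma 0" unfolding x_def by (simp add: sf_def)
    fix i assume i: "i < j"
    hence i2: "i \<le> 2*n" "Suc i \<le> 2*n+1" using j by auto
    have "x (Suc i) = sf (Suc i) - b *\<^sub>R sf i"
      unfolding x_def sf_def rsc_def using s_carrier[OF i2(2)] s_carrier[of i] i2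
      by (simp add: of_mat_minus of_mat_smult)
    also have "\<dots> = - rseq i" using i2 unfolding rseq_def by simp
    finally show "x (Suc i) = sigma (Suc i) - a *\<^sub>R sigma i" by simp
  qed
  finally show ?thesis .
qed

lemma minv_K1_carrier: "minv (K1 q b s j) \<in> carrier_mat ((j+1)*q) ((j+1)*q)" if "j \<le> n" for j
  using minv_inverse_det[OF K1_carrier det_K1[OF that]] by auto

lemma minv_H2_carrier: "minv (H2 q a b s j) \<in> carrier_mat ((j+1)*q) ((j+1)*q)" if "j \<le> n - 1" for j
  using minv_inverse_det[OF H2_carrier det_H2[OF that]] by auto

lemma of_mat_Yt1: assumes j: "j \<le> n"
  shows "of_mat (Yt1 q b s j) = (\<Sum>l<j. unit_block q l * hankel rseq l j)"
proof -
  have c: "rsc b (s (j+l)) - s (j+l+1) \<in> carrier_mat q q" if "l < j" for l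
  proof -
    have "j + l + 1 \<le> 2*n+1" "j+l \<le> 2*n+1" using that j by auto
    thus ?thesis using s_carrier unfolding rsc_def by (intro minus_carrier_mat smult_carrier_mat, auto)
  qed
  have "of_mat (Yt1 q b s j) = (\<Sum>l<j. unit_block q l * of_mat (rsc b (s (j+l)) - s (j+l+1)))"
    unfolding Yt1_def by (rule of_mat_block_col[OF q_pos c])
  also have "\<dots> = (\<Sum>l<j. unit_block q l * hankel rseq l j)"
  proof (rule sum.cong[OF refl])
    fix l assume "l \<in> {..<j}"
    hence "j + l \<le> 2*n" using j by auto
    thus "unit_block q l * of_mat (rsc b (s (j+l)) - s (j+l+1)) = unit_block q l * hankel rseq l j"
      using of_mat_rsc_diff[of "j+l"] by (simp add: hankel_def add.commute)
  qed
  finally show ?thesis .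
qed

lemma of_mat_Y2: assumes j: "j \<le> n"
  shows "of_mat (Y2 q a b s j) = (\<Sum>l<j. unit_block q l * shifted_hankel a rseq l j)"
proof -
  have c: "shat a b s (j+l) \<in> carrier_mat q q" if "l < j" for l
  proof -
    have "j + l + 2 \<le> 2*n+1" using that j by auto
    thus ?thesis using s_carrier unfolding shat_def rsc_def
      by (intro minus_carrier_mat add_carrier_mat smult_carrier_mat, auto)
  qed
  have "of_mat (Y2 q a b s j) = (\<Sum>l<j. unit_block q l * of_mat (shat a b s (j+l)))"
    unfolding Y2_def by (rule of_mat_block_col[OF q_pos c])
  also have "\<dots> = (\<Sum>l<j. unit_block q l * shifted_hankel a rseq l j)"
  proof (rule sum.cong[OF refl])
    fix l assume "l \<in> {..<j}"
    hence "j + l \<le> 2*n - 1" using j by auto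
    thus "unit_block q l * of_mat (shat a b s (j+l)) = unit_block q l * shifted_hankel a rseq l j"
      using of_mat_shat[of "j+l"] by (simp add: shifted_hankel_def add.commute)
  qed
  finally show ?thesis .
qed

definition rowK :: "nat \<Rightarrow> complex mat" where "rowK j = hcat (- (mat_adjoint (Yt1 q b s j) * minv (K1 q b s (j-1)))) (1\<^sub>m q)"

definition rowH :: "nat \<Rightarrow> complex mat" where "rowH j = hcat (- (mat_adjoint (Y2 q a b s j) * minv (H2 q a b s (j-1)))) (1\<^sub>m q)"

lemma rowK_carrier: assumes "1 \<le> j" "j \<le> n" shows "rowK j \<in> carrier_mat q ((j+1)*q)"
proof -
  have "minv (K1 q b s (j-1)) \<in> carrier_mat (j*q) (j*q)" using minv_K1_carrier[of "j-1"] assms by simp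
  thus ?thesis unfolding rowK_def hcat_def by (auto simp: Yt1_def block_col_def)
qed

lemma rowH_carrier: assumes "1 \<le> j" "j \<le> n" shows "rowH j \<in> carrier_mat q ((j+1)*q)"
proof -
  have "minv (H2 q a b s (j-1)) \<in> carrier_mat (j*q) (j*q)" using minv_H2_carrier[of "j-1"] assms by simp
  thus ?thesis unfolding rowH_def hcat_def by (auto simp: Y2_def block_col_def)
qed

lemma rowK_unit_block: assumes "1 \<le> j" "j \<le> n" "i \<le> j"
  shows "of_mat (rowK j) * unit_block q i = hp.K.opoly (invK (j-1)) j i"
proof -
  have Mi: "minv (K1 q b s (j-1)) \<in> carrier_mat (j*q) (j*q)" using minv_K1_carrier[of "j-1"] assms by simp
  have Y: "Yt1 q b s j \<in> carrier_mat (j*q) q" by (simp add: Yt1_def block_col_def)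
  show ?thesis unfolding rowK_def invK_def
    by (rule hp.K.of_mat_hcat_opoly[OF Mi Y of_mat_Yt1[OF assms(2)] assms(3)])
qed

lemma rowH_unit_block: assumes "1 \<le> j" "j \<le> n" "i \<le> j"
  shows "of_mat (rowH j) * unit_block q i = hp.H.opoly (invH (j-1)) j i"
proof -
  have Mi: "minv (H2 q a b s (j-1)) \<in> carrier_mat (j*q) (j*q)" using minv_H2_carrier[of "j-1"] assms by simp
  have Y: "Y2 q a b s j \<in> carrier_mat (j*q) q" by (simp add: Y2_def block_col_def)
  show ?thesis unfolding rowH_def invH_def
    by (rule hp.H.of_mat_hcat_opoly[OF Mi Y of_mat_Y2[OF assms(2)] assms(3)])
qed

lemma rowK_sum: assumes "1 \<le> j" "j \<le> n" "\<And>i. corner q (y i)"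
  shows "of_mat (rowK j) * (\<Sum>i<Suc j. unit_block q i * y i) = (\<Sum>i<Suc j. hp.K.opoly (invK (j-1)) j i * y i)"
  using assms by (simp add: sum_distrib_left mult.assoc[symmetric] rowK_unit_block)

lemma rowH_sum: assumes "1 \<le> j" "j \<le> n" "\<And>i. corner q (y i)"
  shows "of_mat (rowH j) * (\<Sum>i<Suc j. unit_block q i * y i) = (\<Sum>i<Suc j. hp.H.opoly (invH (j-1)) j i * y i)"
  using assms by (simp add: sum_distrib_left mult.assoc[symmetric] rowH_unit_block)

lemma of_mat_Gamma1_opoly: assumes "1 \<le> j" "j \<le> n"
  shows "of_mat (Gamma1 q b s j za) = (\<Sum>i<Suc j. a^i *\<^sub>R hp.K.opoly (invK (j-1)) j i)"
proof -
  have "of_mat (Gamma1 q b s j za) = of_mat (rowK j) * of_mat (Rm q j za * vm q j)"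
  proof -
    have "Gamma1 q b s j za = rowK j * Rm q j za * vm q j" using assms unfolding Gamma1_def rowK_def by simp
    thus ?thesis using of_mat_mult3[OF rowK_carrier[OF assms] Rm_carrier vm_carrier] by simp
  qed
  also have "\<dots> = (\<Sum>i<Suc j. hp.K.opoly (invK (j-1)) j i * (a^i *\<^sub>R fs_one q))"
    unfolding of_mat_Rm_vm by (rule rowK_sum[OF assms], intro corner_scaleR corner_fs_one)
  also have "\<dots> = (\<Sum>i<Suc j. a^i *\<^sub>R hp.K.opoly (invK (j-1)) j i)"
    using hp.K.opoly_corner[OF inverts_invK[of "j-1"]] assms by (auto intro!: sum.cong simp: cornerD)
  finally show ?thesis .
qed

lemma of_mat_Q2_opoly: assumes "1 \<le> j" "j \<le> n"
  shows "of_mat (Q2 q a b s j za) = (\<Sum>i<Suc j. hp.H.opoly (invH (j-1)) j i * rseq i)"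
proof -
  have "Q2 q a b s j za = - (rowH j * Rm q j za * (u2 q a b s j + za \<cdot>\<^sub>m (vm q j * s 0)))"
    using assms unfolding Q2_def rowH_def by simp
  hence "of_mat (Q2 q a b s j za) = - (of_mat (rowH j) * of_mat (Rm q j za * (u2 q a b s j + za \<cdot>\<^sub>m (vm q j * s 0))))"
    using of_mat_mult3[OF rowH_carrier[OF assms] Rm_carrier u2_vm_carrier] by (simp add: of_mat_uminus)
  also have "\<dots> = - (\<Sum>i<Suc j. hp.H.opoly (invH (j-1)) j i * (- rseq i))"
    unfolding of_mat_Rm_u2[OF assms(2)] by (subst rowH_sum[OF assms], auto intro!: corner_uminus rseq_corner)
  also have "\<dots> = (\<Sum>i<Suc j. hp.H.opoly (invH (j-1)) j i * rseq i)" by (simp add: sum_negf)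
  finally show ?thesis .
qed

lemma of_mat_P2_opoly: assumes "1 \<le> j" "j \<le> n"
  shows "of_mat (P2 q a b s j za) = (\<Sum>i<Suc j. a^i *\<^sub>R hp.H.opoly (invH (j-1)) j i)"
proof -
  have "P2 q a b s j za = rowH j * Rm q j za * vm q j" using assms unfolding P2_def rowH_def by simp
  hence "of_mat (P2 q a b s j za) = of_mat (rowH j) * of_mat (Rm q j za * vm q j)"
    using of_mat_mult3[OF rowH_carrier[OF assms] Rm_carrier vm_carrier] by simp
  also have "\<dots> = (\<Sum>i<Suc j. hp.H.opoly (invH (j-1)) j i * (a^i *\<^sub>R fs_one q))"
    unfolding of_mat_Rm_vm by (rule rowH_sum[OF assms], intro corner_scaleR corner_fs_one)
  also have "\<dots> = (\<Sum>i<Suc j. a^i *\<^sub>R hp.H.opoly (invH (j-1)) j i)"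
  proof -
    have "j - 1 \<le> n - 1" using assms by simp
    thus ?thesis using hp.H.opoly_corner[OF inverts_invH[of "j-1"]] assms by (auto intro!: sum.cong simp: cornerD)
  qed
  finally show ?thesis .
qed

lemma of_mat_Theta1_opoly: assumes "1 \<le> j" "j \<le> n"
  shows "of_mat (Theta1 q b s j za) = (\<Sum>i<Suc j. hp.K.opoly (invK (j-1)) j i * sigma i)"
proof -
  have "Theta1 q b s j za = rowK j * Rm q j za * ut1 q b s j" using assms unfolding Theta1_def rowK_def by simp
  hence "of_mat (Theta1 q b s j za) = of_mat (rowK j) * of_mat (Rm q j za * ut1 q b s j)"
    using of_mat_mult3[OF rowK_carrier[OF assms] Rm_carrier ut1_carrier] by simp
  also have "\<dots> = (\<Sum>i<Suc j. hp.K.opoly (invK (j-1)) j i * sigma i)"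
    unfolding of_mat_Rm_ut1[OF assms(2)] by (rule rowK_sum[OF assms sigma_corner])
  finally show ?thesis .
qed

lemma of_mat_mu: assumes "j \<le> n"
  shows "of_mat (mu q a b s j) = hp.K.quad_form (invK j) (Suc j) (\<lambda>k. a^k *\<^sub>R fs_one q)"
proof -
  let ?w = "Rm q j za * vm q j"
  have wc: "?w \<in> carrier_mat ((j+1)*q) q" using Rm_carrier[of j] vm_carrier[of j] by auto
  have "of_mat (mu q a b s j) = adj (of_mat ?w) * of_mat (minv (K1 q b s j)) * of_mat ?w"
    unfolding mu_def Let_def by (rule of_mat_sandwich[OF wc minv_K1_carrier[OF assms]])
  also have "\<dots> = hp.K.quad_form (invK j) (Suc j) (\<lambda>k. a^k *\<^sub>R fs_one q)"
    unfolding of_mat_Rm_vm adj_sum_sandwich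
    unfolding hp.K.quad_form_def hp.K.dual_coeff_def invK_def by simp
  finally show ?thesis .
qed

lemma of_mat_lam: assumes "j \<le> n - 1"
  shows "of_mat (lam q a b s j) = hp.H.quad_form (invH j) (Suc j) rseq"
proof -
  let ?w = "Rm q j za * (u2 q a b s j + rsc a (vm q j * s 0))"
  have wc: "?w \<in> carrier_mat ((j+1)*q) q" using Rm_carrier[of j] u2_vm_carrier[of j] unfolding rsc_def by auto
  have jn: "j \<le> n" using assms by simp
  have "of_mat (lam q a b s j) = adj (of_mat ?w) * of_mat (minv (H2 q a b s j)) * of_mat ?w"
    unfolding lam_def Let_def by (rule of_mat_sandwich[OF wc minv_H2_carrier[OF assms]])
  also have "\<dots> = hp.H.quad_form (invH j) (Suc j) (\<lambda>k. - rseq k)"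
    unfolding rsc_def of_mat_Rm_u2[OF jn] adj_sum_sandwich
    unfolding hp.H.quad_form_def hp.H.dual_coeff_def invH_def by simp
  also have "\<dots> = hp.H.quad_form (invH j) (Suc j) rseq"
    unfolding hp.H.quad_form_def hp.H.dual_coeff_def by (simp add: sum_negf)
  finally show ?thesis .
qed

abbreviation apow :: "nat \<Rightarrow> fsmat" where "apow \<equiv> \<lambda>k. a^k *\<^sub>R fs_one q"

definition Gam :: "nat \<Rightarrow> fsmat" where "Gam j = hp.K_value (invK (j-1)) j"

definition Qa :: "nat \<Rightarrow> fsmat" where "Qa j = hp.H_moment (invH (j-1)) j"

definition normK :: "nat \<Rightarrow> fsmat" where "normK j = hp.K.opoly_norm (invK (j-1)) j"

definition normH :: "nat \<Rightarrow> fsmat" where "normH j = hp.H.opoly_norm (invH (j-1)) j"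

lemma apow_corner: "corner q (apow k)" by (intro corner_scaleR corner_fs_one)

lemma inverts_invK_pred: "j \<le> n + 1 \<Longrightarrow> hp.K.inverts (invK (j-1)) j"
  by (cases j, simp add: hp.K.inverts_def, simp add: inverts_invK)

lemma inverts_invH_pred: "j \<le> n \<Longrightarrow> hp.H.inverts (invH (j-1)) j"
  by (cases j, simp add: hp.H.inverts_def, insert inverts_invH, auto)

lemma Gam_corner: "j \<le> n + 1 \<Longrightarrow> corner q (Gam j)"
  unfolding Gam_def hp.K_value_def by (intro corner_sum corner_scaleR hp.K.opoly_corner[OF inverts_invK_pred])

lemma Qa_corner: "j \<le> n \<Longrightarrow> corner q (Qa j)"
  unfolding Qa_def hp.H_moment_def by (intro corner_sum corner_mult hp.H.opoly_corner[OF inverts_invH_pred] rseq_corner)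

lemma Gam_opoly_pair: assumes "j \<le> n + 1" shows "hp.K.opoly_pair (invK (j-1)) j apow = Gam j"
  unfolding hp.K.opoly_pair_def Gam_def hp.K_value_def using hp.K.opoly_corner[OF inverts_invK_pred[OF assms]]
  by (intro sum.cong refl, simp add: cornerD)

lemma Gam_0: "Gam 0 = fs_one q" unfolding Gam_def hp.K_value_def by (simp add: sum.lessThan_Suc hp.K.opoly_lead)

lemma Qa_0: "Qa 0 = rseq 0" unfolding Qa_def hp.H_moment_def by (simp add: sum.lessThan_Suc hp.H.opoly_lead cornerD rseq_corner)

lemma of_mat_Gamma1_at_a: "j \<le> n \<Longrightarrow> of_mat (Gamma1 q b s j za) = Gam j"
proof (cases "j = 0")
  case True thus ?thesis by (simp add: Gamma1_def Gam_0 fs_one_def)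
next
  case False
  assume "j \<le> n" thus ?thesis using of_mat_Gamma1_opoly[of j] False unfolding Gam_def hp.K_value_def by simp
qed

lemma of_mat_Q2_at_a: "j \<le> n \<Longrightarrow> of_mat (Q2 q a b s j za) = Qa j"
proof (cases "j = 0")
  case True
  have c: "u20 a b s \<in> carrier_mat q q" "s 0 \<in> carrier_mat q q" using s_carrier
    unfolding u20_def rsc_def by auto
  have "of_mat (Q2 q a b s j za) = - (of_mat (u20 a b s) + a *\<^sub>R sf 0)"
    using True c unfolding Q2_def sf_def by (simp add: of_mat_uminus of_mat_smult of_mat_add)
  thus ?thesis using True by (simp add: of_mat_u20 Qa_0)
next
  case False
  assume "j \<le> n" thus ?thesis using of_mat_Q2_opoly[of j] False unfolding Qa_def hp.H_moment_def by simp
qed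

lemma mu_carrier: assumes "j \<le> n" shows "mu q a b s j \<in> carrier_mat q q"
proof -
  have "Rm q j za * vm q j \<in> carrier_mat ((j+1)*q) q" using Rm_carrier[of j] vm_carrier[of j] by auto
  then show ?thesis using minv_K1_carrier[OF assms] mat_adjoint_carrier unfolding mu_def Let_def
    by (metis mult_carrier_mat)
qed

lemma lam_carrier: assumes "j \<le> n - 1" shows "lam q a b s j \<in> carrier_mat q q"
proof -
  have "Rm q j za * (u2 q a b s j + rsc a (vm q j * s 0)) \<in> carrier_mat ((j+1)*q) q"
    using Rm_carrier[of j] u2_vm_carrier[of j] unfolding rsc_def by auto
  then show ?thesis using minv_H2_carrier[OF assms] mat_adjoint_carrier unfolding lam_def Let_def
    by (metis mult_carrier_mat)
qed

lemma mDSM_carrier: "j \<le> n \<Longrightarrow> mDSM q a b s j \<in> carrier_mat q q"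
  unfolding mDSM_def using mu_carrier[of j] mu_carrier[of "j-1"] by (auto intro!: minus_carrier_mat)

lemma lDSM_carrier: "j \<le> n - 1 \<Longrightarrow> lDSM q a b s j \<in> carrier_mat q q"
  unfolding lDSM_def using lam_carrier[of j] lam_carrier[of "j-1"] by (auto intro!: minus_carrier_mat)

lemma of_mat_mDSM: assumes j: "j \<le> n"
  shows "of_mat (mDSM q a b s j) = adj (Gam j) * invK j j j * Gam j"
proof -
  have sch: "hp.K.quad_form (invK j) (Suc j) apow = hp.K.quad_form (invK (j-1)) j apow + adj (Gam j) * invK j j j * Gam j"
  proof -
    have a1: "hp.K.inverts (invK (j-1)) j" using inverts_invK_pred[of j] j by simp
    have a2: "hp.K.inverts (invK j) (Suc j)" using inverts_invK[OF j] .
    have "Suc (j - 1) = j \<or> j = 0" by auto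
    hence a3: "hp.K.inverts (invK (j-1)) j" using a1 by simp
    show ?thesis using hp.K.quad_form_Suc[OF a3, of "invK j" apow] a2 apow_corner Gam_opoly_pair[of j] j
      by (cases j) simp_all
  qed
  show ?thesis
  proof (cases "j = 0")
    case True
    thus ?thesis using sch of_mat_mu[of 0] by (simp add: mDSM_def hp.K.quad_form_def)
  next
    case False
    then obtain j' where jj: "j = Suc j'" by (cases j, auto)
    have "of_mat (mDSM q a b s j) = of_mat (mu q a b s j) - of_mat (mu q a b s j')"
      using False jj mu_carrier[OF j] mu_carrier[of j'] j unfolding mDSM_def by (simp add: of_mat_minus)
    also have "\<dots> = adj (Gam j) * invK j j j * Gam j"
      using sch jj j of_mat_mu[of j] of_mat_mu[of j'] by simp
    finally show ?thesis .
  qed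
qed

lemma Qa_opoly_pair: "hp.H.opoly_pair (invH (j-1)) j rseq = Qa j"
  unfolding hp.H.opoly_pair_def Qa_def hp.H_moment_def by simp

lemma of_mat_lDSM: assumes j: "j \<le> n - 1"
  shows "of_mat (lDSM q a b s j) = adj (Qa j) * invH j j j * Qa j"
proof -
  have j1: "j \<le> n" using j by simp
  have sch: "hp.H.quad_form (invH j) (Suc j) rseq = hp.H.quad_form (invH (j-1)) j rseq + adj (Qa j) * invH j j j * Qa j"
    using hp.H.quad_form_Suc[OF inverts_invH_pred[OF j1], of "invH j" rseq] inverts_invH[OF j] rseq_corner Qa_opoly_pair[of j] by (cases j) simp_all
  show ?thesis
  proof (cases "j = 0")
    case True
    thus ?thesis using sch of_mat_lam[of 0] by (simp add: lDSM_def hp.H.quad_form_def)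
  next
    case False
    then obtain j' where jj: "j = Suc j'" by (cases j, auto)
    have "of_mat (lDSM q a b s j) = of_mat (lam q a b s j) - of_mat (lam q a b s j')"
      using False jj lam_carrier[OF j] lam_carrier[of j'] j unfolding lDSM_def by (simp add: of_mat_minus)
    also have "\<dots> = adj (Qa j) * invH j j j * Qa j"
      using sch jj j of_mat_lam[of j] of_mat_lam[of j'] by simp
    finally show ?thesis .
  qed
qed

lemma Qa_adj_Gam: assumes j: "j \<le> n" shows "Qa j * adj (Gam j) = normK j"
  unfolding Qa_def Gam_def normK_def
  by (rule hp.H_moment_adj_K_value[OF inverts_invK_pred[of j] inverts_invH_pred[OF j]], insert j, auto)

lemma normK_inverse: assumes j: "j \<le> n" shows "normK j * invK j j j = fs_one q" "invK j j j * normK j = fs_one q"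
  unfolding normK_def using hp.K.opoly_norm_inverse[OF inverts_invK_pred[of j] ] inverts_invK[OF j] j by (cases j, auto)+

lemma Gam_Suc_adj_Qa: assumes j: "j \<le> n - 1" shows "Gam (Suc j) * adj (Qa j) = - normH j"
proof -
  have j1: "j \<le> n" using j by simp
  have "hp.K.inverts (invK j) (Suc j)" using inverts_invK j1 by simp
  thus ?thesis unfolding Gam_def Qa_def normH_def using hp.K_value_Suc_adj_H_moment[OF _ inverts_invH_pred[OF j1]] by simp
qed

lemma normH_inverse: assumes j: "j \<le> n - 1" shows "normH j * invH j j j = fs_one q" "invH j j j * normH j = fs_one q"
proof -
  have j1: "j \<le> n" using j by simp
  show "normH j * invH j j j = fs_one q" "invH j j j * normH j = fs_one q"
    unfolding normH_def using hp.H.opoly_norm_inverse[OF inverts_invH_pred[OF j1] inverts_invH[OF j]] by auto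
qed

lemma of_mat_P2_at_a: assumes j: "1 \<le> j" "j \<le> n - 1"
  shows "of_mat (P2 q a b s j za) = Qa j * hp.K.quad_form (invK j) (Suc j) apow"
proof -
  have j1: "j \<le> n" using j by simp
  have "of_mat (P2 q a b s j za) = hp.H_value (invH (j-1)) j"
    using of_mat_P2_opoly[of j] j1 j by (simp add: hp.H_value_def)
  also have "\<dots> = Qa j * hp.K.quad_form (invK j) (Suc j) apow"
    unfolding Qa_def by (rule hp.H_value_eq[OF inverts_invK[OF j1] inverts_invH_pred[OF j1]])
  finally show ?thesis .
qed

lemma of_mat_Theta1_at_a: assumes j: "1 \<le> j" "j \<le> n"
  shows "of_mat (Theta1 q b s j za) = Gam j * (sf 0 + hp.H.quad_form (invH (j-1)) j rseq)"
proof -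
  have "of_mat (Theta1 q b s j za) = (\<Sum>i<Suc j. hp.K.opoly (invK (j-1)) j i * sigma i)"
    using of_mat_Theta1_opoly[OF j] .
  also have "\<dots> = Gam j * (sf 0 + hp.H.quad_form (invH (j-1)) j rseq)"
    unfolding Gam_def by (rule hp.K_moment_eq[OF inverts_invK_pred[of j] inverts_invH_pred[of j]], insert j, auto)
  finally show ?thesis .
qed

lemma normK_corner: "j \<le> n \<Longrightarrow> corner q (normK j)"
  unfolding normK_def by (intro hp.K.opoly_norm_corner inverts_invK_pred) simp

lemma normH_corner: "j \<le> n \<Longrightarrow> corner q (normH j)"
  unfolding normH_def by (intro hp.H.opoly_norm_corner inverts_invH_pred)

lemma invK_corner: "j \<le> n \<Longrightarrow> corner q (invK j j j)" using hp.K.invertsD(3)[OF inverts_invK] by auto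

lemma invH_corner: "j \<le> n - 1 \<Longrightarrow> corner q (invH j j j)" using hp.H.invertsD(3)[OF inverts_invH] by auto

lemma of_mat_msum_mDSM: assumes j: "j \<le> n"
  shows "of_mat (msum q (mDSM q a b s) (j+1)) = hp.K.quad_form (invK j) (Suc j) apow"
proof -
  have "mDSM q a b s = (\<lambda>i. if i = 0 then mu q a b s 0 else mu q a b s i - mu q a b s (i - 1))"
    by (auto simp: mDSM_def)
  then show ?thesis using msum_telescope[of j "mu q a b s"] mu_carrier j by (simp add: of_mat_mu)
qed

lemma of_mat_msum_lDSM: assumes j: "1 \<le> j" "j \<le> n"
  shows "of_mat (msum q (lDSM q a b s) j) = hp.H.quad_form (invH (j-1)) j rseq"
proof -
  obtain i where i: "j = Suc i" using j by (cases j) auto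
  have "lDSM q a b s = (\<lambda>i. if i = 0 then lam q a b s 0 else lam q a b s i - lam q a b s (i - 1))"
    by (auto simp: lDSM_def)
  then show ?thesis using msum_telescope[of i "lam q a b s"] lam_carrier j i by (simp add: of_mat_lam)
qed

lemma Gamma1_carrier: assumes "1 \<le> j" "j \<le> n" shows "Gamma1 q b s j za \<in> carrier_mat q q"
proof -
  have "Gamma1 q b s j za = rowK j * Rm q j za * vm q j" using assms unfolding Gamma1_def rowK_def by simp
  thus ?thesis using rowK_carrier[OF assms] Rm_carrier[of j] vm_carrier[of j] by (metis mult_carrier_mat)
qed

lemma P2_carrier: assumes "1 \<le> j" "j \<le> n" shows "P2 q a b s j za \<in> carrier_mat q q"
proof -
  have "P2 q a b s j za = rowH j * Rm q j za * vm q j" using assms unfolding P2_def rowH_def by simp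
  thus ?thesis using rowH_carrier[OF assms] Rm_carrier[of j] vm_carrier[of j] by (metis mult_carrier_mat)
qed

lemma Theta1_carrier: assumes "1 \<le> j" "j \<le> n" shows "Theta1 q b s j za \<in> carrier_mat q q"
proof -
  have "Theta1 q b s j za = rowK j * Rm q j za * ut1 q b s j" using assms unfolding Theta1_def rowK_def by simp
  thus ?thesis using rowK_carrier[OF assms] Rm_carrier[of j] ut1_carrier[of j] by (metis mult_carrier_mat)
qed

lemma Q2_carrier: "j \<le> n \<Longrightarrow> Q2 q a b s j za \<in> carrier_mat q q"
proof (cases "j = 0")
  case True
  have "u20 a b s \<in> carrier_mat q q" "s 0 \<in> carrier_mat q q" using s_carrier unfolding u20_def rsc_def by auto
  thus ?thesis using True unfolding Q2_def by auto
next
  case False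
  assume j: "j \<le> n"
  hence "rowH j * Rm q j za * (u2 q a b s j + za \<cdot>\<^sub>m (vm q j * s 0)) \<in> carrier_mat q q"
    using rowH_carrier[of j] Rm_carrier[of j] u2_vm_carrier[of j] False by (metis less_one not_le mult_carrier_mat)
  thus ?thesis using False unfolding Q2_def rowH_def by simp
qed

lemma Qa_eq_Gam_minv_mDSM:
  assumes j: "j \<le> n" and gi: "corner_inverse q (Gam j) gi"
  shows "minv (mDSM q a b s j) \<in> carrier_mat q q" "Qa j = Gam j * of_mat (minv (mDSM q a b s j))"
    "corner_inverse q (Qa j) (of_mat (mDSM q a b s j) * gi)"
proof -
  have "corner_inverse q (invK j j j) (normK j)"
    using normK_corner[OF j] normK_inverse[OF j] unfolding corner_inverse_def by auto
  from of_mat_minv_sandwich[OF mDSM_carrier[OF j] of_mat_mDSM[OF j] Gam_corner gi invK_corner[OF j]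
      this Qa_corner[OF j] Qa_adj_Gam[OF j]] j
  show "minv (mDSM q a b s j) \<in> carrier_mat q q" "Qa j = Gam j * of_mat (minv (mDSM q a b s j))"
    "corner_inverse q (Qa j) (of_mat (mDSM q a b s j) * gi)" by auto
qed

lemma Gam_Suc_eq_Qa_minv_lDSM:
  assumes j: "j \<le> n - 1" and qi: "corner_inverse q (Qa j) qi"
  shows "minv (lDSM q a b s j) \<in> carrier_mat q q" "Gam (Suc j) = - (Qa j * of_mat (minv (lDSM q a b s j)))"
    "corner_inverse q (Gam (Suc j)) (- (of_mat (lDSM q a b s j) * qi))"
proof -
  have j1: "j \<le> n" using j by simp
  have "corner_inverse q (invH j j j) (normH j)"
    using normH_corner[OF j1] normH_inverse[OF j] unfolding corner_inverse_def by auto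
  moreover have "corner q (- Gam (Suc j))" using Gam_corner[of "Suc j"] j1 by (simp add: corner_uminus)
  moreover have "- Gam (Suc j) * adj (Qa j) = normH j" using Gam_Suc_adj_Qa[OF j] by simp
  ultimately have r: "minv (lDSM q a b s j) \<in> carrier_mat q q"
      "- Gam (Suc j) = Qa j * of_mat (minv (lDSM q a b s j))"
      "corner_inverse q (- Gam (Suc j)) (of_mat (lDSM q a b s j) * qi)"
    using of_mat_minv_sandwich[OF lDSM_carrier[OF j] of_mat_lDSM[OF j] Qa_corner[OF j1] qi invH_corner[OF j]] by auto
  show "minv (lDSM q a b s j) \<in> carrier_mat q q" by (rule r(1))
  show "Gam (Suc j) = - (Qa j * of_mat (minv (lDSM q a b s j)))" using r(2) by (metis minus_minus)
  show "corner_inverse q (Gam (Suc j)) (- (of_mat (lDSM q a b s j) * qi))"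
    using corner_inverse_uminus[OF r(3)] by simp
qed

lemma Gam_eq_mlprod:
  "j \<le> n \<Longrightarrow> mlprod q a b s j \<in> carrier_mat q q \<and> Gam j = (-1)^j *\<^sub>R of_mat (mlprod q a b s j)
     \<and> (\<exists>gi. corner_inverse q (Gam j) gi)"
proof (induction j)
  case 0
  show ?case by (auto simp: Gam_0 fs_one_def[symmetric] corner_inverse_def intro!: exI[of _ "fs_one q"] corner_fs_one fs_one_fs_one)
next
  case (Suc j)
  then have j: "j \<le> n - 1" by simp
  from Suc obtain gi where c: "mlprod q a b s j \<in> carrier_mat q q"
    and G: "Gam j = (-1)^j *\<^sub>R of_mat (mlprod q a b s j)" and gi: "corner_inverse q (Gam j) gi" by auto
  have j1: "j \<le> n" using j by simp
  note m = Qa_eq_Gam_minv_mDSM[OF j1 gi] and l = Gam_Suc_eq_Qa_minv_lDSM[OF j m(3)]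
  have "mlprod q a b s (Suc j) \<in> carrier_mat q q" using mult_carrier_mat[OF mult_carrier_mat[OF c m(1)] l(1)] by simp
  moreover have "of_mat (mlprod q a b s (Suc j))
      = of_mat (mlprod q a b s j) * of_mat (minv (mDSM q a b s j)) * of_mat (minv (lDSM q a b s j))"
    using of_mat_mult_carrier[OF mult_carrier_mat[OF c m(1)] l(1)] of_mat_mult_carrier[OF c m(1)] by simp
  ultimately show ?case using l(2,3) m(2) j by (auto simp: G mult.assoc)
qed

lemma Q2_at_a:
  assumes j: "j \<le> n - 1"
  shows "Q2 q a b s j za = ((-1)^j) \<cdot>\<^sub>m (mlprod q a b s j * minv (mDSM q a b s j))"
proof -
  have j1: "j \<le> n" using j by simp
  obtain gi where c: "mlprod q a b s j \<in> carrier_mat q q"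
    and G: "Gam j = (-1)^j *\<^sub>R of_mat (mlprod q a b s j)" and gi: "corner_inverse q (Gam j) gi"
    using Gam_eq_mlprod[OF j1] by auto
  note m = Qa_eq_Gam_minv_mDSM[OF j1 gi]
  show ?thesis
    by (rule of_mat_inj[OF Q2_carrier[OF j1]])
      (use c m(1) in \<open>auto simp: of_mat_sign_mult of_mat_Q2_at_a[OF j1] m(2) G\<close>)
qed

lemma Gamma1_at_a:
  assumes j: "1 \<le> j" "j \<le> n"
  shows "Gamma1 q b s j za = ((-1)^j) \<cdot>\<^sub>m mlprod q a b s j"
  using Gam_eq_mlprod[OF j(2)]
  by (intro of_mat_inj[OF Gamma1_carrier[OF j]]) (auto simp: of_mat_sign of_mat_Gamma1_at_a[OF j(2)])

lemma P2_at_a: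
  assumes j: "1 \<le> j" "j \<le> n - 1"
  shows "P2 q a b s j za
    = ((-1)^j) \<cdot>\<^sub>m (mlprod q a b s j * minv (mDSM q a b s j) * msum q (mDSM q a b s) (j+1))"
proof -
  have j1: "j \<le> n" using j by simp
  obtain gi where c: "mlprod q a b s j \<in> carrier_mat q q"
    and G: "Gam j = (-1)^j *\<^sub>R of_mat (mlprod q a b s j)" and gi: "corner_inverse q (Gam j) gi"
    using Gam_eq_mlprod[OF j1] by auto
  note m = Qa_eq_Gam_minv_mDSM[OF j1 gi]
  have ms: "msum q (mDSM q a b s) (j+1) \<in> carrier_mat q q"
    using mDSM_carrier j1 by (intro msum_carrier) auto
  have cm: "mlprod q a b s j * minv (mDSM q a b s j) \<in> carrier_mat q q" using c m(1) by simp
  have "of_mat (((-1)^j :: complex) \<cdot>\<^sub>m (mlprod q a b s j * minv (mDSM q a b s j) * msum q (mDSM q a b s) (j+1)))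
      = (-1)^j *\<^sub>R (of_mat (mlprod q a b s j) * of_mat (minv (mDSM q a b s j))
          * hp.K.quad_form (invK j) (Suc j) apow)"
    by (simp only: of_mat_sign_mult[OF cm ms] of_mat_msum_mDSM[OF j1] of_mat_mult_carrier[OF c m(1)])
  then show ?thesis
    by (intro of_mat_inj[OF P2_carrier[OF j(1) j1]])
      (use cm ms in \<open>auto simp: of_mat_P2_at_a[OF j] m(2) G mult.assoc\<close>)
qed

lemma Theta1_at_a:
  assumes j: "1 \<le> j" "j \<le> n"
  shows "Theta1 q b s j za = ((-1)^j) \<cdot>\<^sub>m (mlprod q a b s j * (s 0 + msum q (lDSM q a b s) j))"
proof -
  have c: "mlprod q a b s j \<in> carrier_mat q q" and G: "Gam j = (-1)^j *\<^sub>R of_mat (mlprod q a b s j)"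
    using Gam_eq_mlprod[OF j(2)] by auto
  have ls: "msum q (lDSM q a b s) j \<in> carrier_mat q q"
    using lDSM_carrier j by (intro msum_carrier) auto
  have s0: "s 0 \<in> carrier_mat q q" using s_carrier by auto
  have "of_mat (s 0 + msum q (lDSM q a b s) j) = sf 0 + hp.H.quad_form (invH (j-1)) j rseq"
    using s0 ls by (simp add: of_mat_add sf_def of_mat_msum_lDSM[OF j])
  then show ?thesis
    by (intro of_mat_inj[OF Theta1_carrier[OF j]])
      (use c s0 ls in \<open>auto simp: of_mat_sign_mult of_mat_Theta1_at_a[OF j] G\<close>)
qed

end

theorem mainTheorem9:
  fixes q n :: nat and a b :: real and s :: "nat \<Rightarrow> complex mat"
  assumes "q \<ge> 1" and "n \<ge> 1" and "a < b"
    and "\<And>j. j \<le> 2*n+1 \<Longrightarrow> s j \<in> carrier_mat q q \<and> hermitian (s j)"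
    and "pos_def (H1 q s n)" and "pos_def (H2 q a b s (n-1))"
    and "pos_def (K1 q b s n)" and "pos_def (K2 q a s n)"
  shows "(\<forall>j. j \<le> n-1 \<longrightarrow>
            Q2 q a b s j (complex_of_real a)
              = ((-1)^j) \<cdot>\<^sub>m (mlprod q a b s j * minv (mDSM q a b s j)))
       \<and> (\<forall>j. 1 \<le> j \<and> j \<le> n \<longrightarrow>
            Gamma1 q b s j (complex_of_real a) = ((-1)^j) \<cdot>\<^sub>m mlprod q a b s j)
       \<and> (\<forall>j. 1 \<le> j \<and> j \<le> n-1 \<longrightarrow>
            P2 q a b s j (complex_of_real a)
              = ((-1)^j) \<cdot>\<^sub>m (mlprod q a b s j * minv (mDSM q a b s j)
                                * msum q (mDSM q a b s) (j+1)))
       \<and> (\<forall>j. 1 \<le> j \<and> j \<le> n \<longrightarrow>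
            Theta1 q b s j (complex_of_real a)
              = ((-1)^j) \<cdot>\<^sub>m (mlprod q a b s j * (s 0 + msum q (lDSM q a b s) j)))"
proof -
  interpret dsm_setting q n a b s using assms by unfold_locales auto
  show ?thesis using Q2_at_a Gamma1_at_a P2_at_a Theta1_at_a by blast
qed

end
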